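(* Assume $\kappa>0$, $\phi_*:=\inf_{r\ge0}\phi(r)>0$ and $\phi_*M>\sigma\bar\theta$. Then for every sectorial solution of system (CSF) it is not the case that all $\mathbf v_i(t)\to0$; consequently there exists $\bar{\mathbf v}\in\mathbb R^n$ with $|\bar{\mathbf v}|=\bar\theta^{1/p}$ such that every $\mathbf v_i(t)$ converges to $\bar{\mathbf v}$ exponentially fast.
   Context: Fix integers $N\ge1$, $n\ge1$, masses $m_1,\dots,m_N>0$ with $M=\sum_i m_i$, parameters $\sigma>0$, $p>0$, $\kappa\ge0$, and a communication kernel $\phi:[0,\infty)\to(0,\infty)$ that is smooth, positive and non-increasing. Write $\phi_{ij}=\phi(|\mathbf x_i-\mathbf x_j|)$, with $|\cdot|$ the Euclidean norm on $\mathbb R^n$. System (CSF) is, for $i=1,\dots,N$, $$\dot{\mathbf x}_i=\mathbf v_i,\qquad \dot{\mathbf v}_i=\sum_{j=1}^N m_j\phi_{ij}(\mathbf v_j-\mathbf v_i)+\sigma(\theta_i-|\mathbf v_i|^p)\mathbf v_i,\qquad \dot\theta_i=\kappa\sum_{j=1}^N m_j\phi_{ij}(\theta_j-\theta_i),$$ with $\mathbf x_i,\mathbf v_i\in\mathbb R^n$ and initial values $\theta_i(0)>0$; solutions are considered for $t\ge0$. Set $\bar\theta=\frac1M\sum_i m_i\theta_i(0)$; this weighted average is conserved in time. A solution is called sectorial if there exists a unit vector $\mathbf e\in\mathbb R^n$ with $\mathbf e\cdot\mathbf v_i(0)>0$ for all $i=1,\dots,N$. *)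

theory Defs
  imports "HOL-Analysis.Analysis"
begin

definition smooth_on_halfline :: "(real \<Rightarrow> real) \<Rightarrow> bool" where
  "smooth_on_halfline f \<longleftrightarrow>
     (\<exists>D :: nat \<Rightarrow> real \<Rightarrow> real. D 0 = f \<and>
        (\<forall>k t. t \<ge> 0 \<longrightarrow> (D k has_real_derivative D (Suc k) t) (at t within {0..})))"

definition comm_kernel :: "(real \<Rightarrow> real) \<Rightarrow> bool" where
  "comm_kernel \<phi> \<longleftrightarrow> smooth_on_halfline \<phi> \<and> (\<forall>r\<ge>0. \<phi> r > 0) \<and>
     (\<forall>r s. 0 \<le> r \<longrightarrow> r \<le> s \<longrightarrow> \<phi> s \<le> \<phi> r)"

text \<open>Solution of system (CSF) for t \<ge> 0. Particles are indexed by i < N,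
  positions/velocities live in the Euclidean space 'a (so n = DIM('a)).\<close>
definition CSF_solution ::
  "nat \<Rightarrow> (nat \<Rightarrow> real) \<Rightarrow> real \<Rightarrow> real \<Rightarrow> real \<Rightarrow> (real \<Rightarrow> real) \<Rightarrow>
   (nat \<Rightarrow> real \<Rightarrow> 'a::euclidean_space) \<Rightarrow> (nat \<Rightarrow> real \<Rightarrow> 'a) \<Rightarrow> (nat \<Rightarrow> real \<Rightarrow> real) \<Rightarrow> bool"
  where
  "CSF_solution N m \<sigma> p \<kappa> \<phi> x v \<theta> \<longleftrightarrow>
     (\<forall>i<N. \<forall>t\<ge>0.
        (x i has_vector_derivative v i t) (at t within {0..}) \<and>
        (v i has_vector_derivative
            ((\<Sum>j<N. (m j * \<phi> (norm (x i t - x j t))) *\<^sub>R (v j t - v i t))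
             + (\<sigma> * (\<theta> i t - norm (v i t) powr p)) *\<^sub>R v i t)) (at t within {0..}) \<and>
        (\<theta> i has_real_derivative
            (\<kappa> * (\<Sum>j<N. m j * \<phi> (norm (x i t - x j t)) * (\<theta> j t - \<theta> i t)))) (at t within {0..}))"

end

theory Submission
  imports Defs
begin

text \<open>
  The temperatures relax exponentially to their conserved weighted mean \<open>\<theta>bar\<close>, because their
  weighted variance dissipates at rate \<open>2 \<kappa> \<phi>\<^sub>* M\<close>. A maximum principle bounds the speeds, and
  the sector \<open>{e \<bullet> v > 0}\<close> is invariant. The velocity spread
  \<open>D = \<Sum>\<^sub>i \<Sum>\<^sub>j m\<^sub>i m\<^sub>j |v\<^sub>i - v\<^sub>j|\<^sup>2\<close> satisfies
  \<open>D' \<le> - 2 (\<phi>\<^sub>* M - \<sigma> \<theta>bar) D + (exponentially small)\<close>, so the hypothesis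
  \<open>\<phi>\<^sub>* M > \<sigma> \<theta>bar\<close> forces exponential alignment, and particle 0 follows
  \<open>v' = \<sigma> (\<theta>bar - |v|\<^sup>p) v\<close> up to an exponentially small defect.
  The sector keeps \<open>v\<^sub>0\<close> away from 0: otherwise every friction coefficient
  \<open>\<theta>\<^sub>i - |v\<^sub>i|\<^sup>p\<close> would eventually exceed \<open>\<theta>bar / 2\<close> and the momentum
  \<open>\<Sum>\<^sub>i m\<^sub>i (e \<bullet> v\<^sub>i)\<close> would grow exponentially. Once \<open>|v\<^sub>0|\<close> is bounded below,
  \<open>|v\<^sub>0|\<^sup>p \<rightarrow> \<theta>bar\<close> exponentially, hence \<open>v\<^sub>0'\<close> decays exponentially and \<open>v\<^sub>0\<close> converges
  exponentially to some \<open>vbar\<close> with \<open>|vbar| = \<theta>bar\<^bsup>1/p\<^esup>\<close>; alignment carries this over to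
  every particle.
\<close>


section \<open>Calculus on a half-line\<close>

lemma DERIV_nonneg_imp_nondecreasing_atLeast:
  fixes f f' :: "real \<Rightarrow> real"
  assumes deriv: "\<And>t. t \<ge> a \<Longrightarrow> (f has_real_derivative f' t) (at t within {a..})"
    and nonneg: "\<And>t. t \<ge> a \<Longrightarrow> f' t \<ge> 0" and "a \<le> s" "s \<le> t"
  shows "f s \<le> f t"
proof (rule DERIV_nonneg_imp_increasing_open[OF \<open>s \<le> t\<close>])
  show "continuous_on {s..t} f"
    using \<open>a \<le> s\<close> by (intro DERIV_continuous_on[where D=f']) (auto intro!: DERIV_subset[OF deriv])
  fix y assume "s < y" "y < t"
  then have "y \<in> interior {a..}" using \<open>a \<le> s\<close> by simp
  then have "at y within {a..} = at y" by (rule at_within_interior)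
  then show "\<exists>d. DERIV f y :> d \<and> d \<ge> 0"
    using deriv[of y] nonneg[of y] \<open>a \<le> s\<close> \<open>s < y\<close> by auto
qed

lemma has_real_derivative_inner:
  fixes f g :: "real \<Rightarrow> 'a::real_inner"
  assumes "(f has_vector_derivative f') (at t within S)" "(g has_vector_derivative g') (at t within S)"
  shows "((\<lambda>t. f t \<bullet> g t) has_real_derivative (f t \<bullet> g' + f' \<bullet> g t)) (at t within S)"
  using bounded_bilinear.has_vector_derivative[OF bounded_bilinear_inner assms]
  by (simp add: has_real_derivative_iff_has_vector_derivative)

lemma has_real_derivative_norm_powr:
  fixes f :: "real \<Rightarrow> 'a::real_inner"
  assumes "f t \<noteq> 0" "(f has_vector_derivative f') (at t within S)"
  shows "((\<lambda>t. norm (f t) powr p) has_real_derivative p * norm (f t) powr (p - 2) * (f t \<bullet> f'))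
           (at t within S)"
proof -
  have norm_powr: "norm (f s) powr q = (f s \<bullet> f s) powr (q / 2)" for s q
    by (simp add: norm_eq_sqrt_inner powr_half_sqrt[symmetric] powr_powr)
  have "f t \<bullet> f t > 0" using assms(1) by simp
  from DERIV_chain2[OF has_real_derivative_powr[OF this, of "p / 2"] has_real_derivative_inner[OF assms(2,2)]]
  have "((\<lambda>t. (f t \<bullet> f t) powr (p / 2)) has_real_derivative
      p / 2 * (f t \<bullet> f t) powr (p / 2 - 1) * (f t \<bullet> f' + f' \<bullet> f t)) (at t within S)"
    by simp
  moreover have "(f t \<bullet> f t) powr (p / 2 - 1) = norm (f t) powr (p - 2)"
    using norm_powr[of t "p - 2"] by (simp add: diff_divide_distrib)
  ultimately show ?thesis by (simp add: norm_powr inner_commute mult.assoc)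
qed

lemma nonneg_if_positive_before:
  fixes g :: "real \<Rightarrow> real"
  assumes "continuous_on {a..} g" "a < t" "\<And>s. a \<le> s \<Longrightarrow> s < t \<Longrightarrow> g s > 0"
  shows "g t \<ge> 0"
proof (rule ccontr)
  assume "\<not> g t \<ge> 0"
  then obtain d where "d > 0" and d: "\<And>s. s \<ge> a \<Longrightarrow> dist s t < d \<Longrightarrow> dist (g s) (g t) < - g t"
    using assms(1,2) unfolding continuous_on_iff
    by (metis atLeast_iff less_imp_le neg_0_less_iff_less not_le)
  define s where "s = max a (t - d / 2)"
  have "a \<le> s" "s < t" "dist s t < d" using \<open>d > 0\<close> \<open>a < t\<close> by (auto simp: s_def dist_real_def)
  then have "g s < 0" using d[of s] by (simp add: dist_real_def)
  with assms(3)[OF \<open>a \<le> s\<close> \<open>s < t\<close>] show False by simp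
qed

lemma first_nonpositive_time:
  fixes g :: "nat \<Rightarrow> real \<Rightarrow> real"
  assumes cont: "\<And>i. i < N \<Longrightarrow> continuous_on {a..} (g i)"
    and init: "\<And>i. i < N \<Longrightarrow> g i a > 0"
    and "i < N" "a \<le> t" "g i t \<le> 0"
  obtains t\<^sub>0 k where "a < t\<^sub>0" "t\<^sub>0 \<le> t" "k < N" "g k t\<^sub>0 = 0"
    "\<And>j s. j < N \<Longrightarrow> a \<le> s \<Longrightarrow> s < t\<^sub>0 \<Longrightarrow> g j s > 0"
    "\<And>j s. j < N \<Longrightarrow> a \<le> s \<Longrightarrow> s \<le> t\<^sub>0 \<Longrightarrow> g j s \<ge> 0"
proof -
  define S where "S = (\<Union>j<N. {a..t} \<inter> g j -` {..0})"
  have S_iff: "s \<in> S \<longleftrightarrow> a \<le> s \<and> s \<le> t \<and> (\<exists>j<N. g j s \<le> 0)" for s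
    by (auto simp: S_def)
  have "closed S" unfolding S_def
  proof (intro closed_UN ballI)
    fix j assume "j \<in> {..<N}"
    then have "continuous_on {a..} (g j)" using cont by simp
    then have "continuous_on {a..t} (g j)" by (rule continuous_on_subset) auto
    then show "closed ({a..t} \<inter> g j -` {..0})" by (intro continuous_closed_preimage) auto
  qed auto
  moreover have "S \<noteq> {}" using assms(3-5) S_iff by blast
  moreover have "bdd_below S" using S_iff by (auto intro: bdd_belowI[of _ a])
  ultimately have "Inf S \<in> S" by (rule closed_contains_Inf[rotated -1])
  define t\<^sub>0 where "t\<^sub>0 = Inf S"
  obtain k where k: "k < N" "g k t\<^sub>0 \<le> 0" and "a \<le> t\<^sub>0" "t\<^sub>0 \<le> t"
    using \<open>Inf S \<in> S\<close> S_iff t\<^sub>0_def by auto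
  have "t\<^sub>0 \<noteq> a" using k init by force
  with \<open>a \<le> t\<^sub>0\<close> have "a < t\<^sub>0" by simp
  have before: "g j s > 0" if "j < N" "a \<le> s" "s < t\<^sub>0" for j s
  proof (rule ccontr)
    assume "\<not> g j s > 0"
    then have "s \<in> S" using that \<open>t\<^sub>0 \<le> t\<close> S_iff by auto
    then have "t\<^sub>0 \<le> s" unfolding t\<^sub>0_def using \<open>bdd_below S\<close> by (rule cInf_lower)
    with \<open>s < t\<^sub>0\<close> show False by simp
  qed
  have upto: "g j s \<ge> 0" if "j < N" "a \<le> s" "s \<le> t\<^sub>0" for j s
  proof (cases "s < t\<^sub>0")
    case True then show ?thesis using before that by force
  next
    case False
    then show ?thesis
      using that nonneg_if_positive_before[OF cont \<open>a < t\<^sub>0\<close> before] by simp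
  qed
  have "g k t\<^sub>0 = 0" using upto[OF k(1) \<open>a \<le> t\<^sub>0\<close>] k(2) by simp
  with k \<open>a < t\<^sub>0\<close> \<open>t\<^sub>0 \<le> t\<close> before upto show thesis using that by blast
qed

lemma positivity_barrier:
  fixes g g' :: "nat \<Rightarrow> real \<Rightarrow> real"
  assumes deriv: "\<And>i t. i < N \<Longrightarrow> t \<ge> a \<Longrightarrow> (g i has_real_derivative g' i t) (at t within {a..})"
    and init: "\<And>i. i < N \<Longrightarrow> g i a > 0"
    and first_zero: "\<And>i t. i < N \<Longrightarrow> t > a \<Longrightarrow> g i t = 0 \<Longrightarrow>
       (\<And>j s. j < N \<Longrightarrow> a \<le> s \<Longrightarrow> s \<le> t \<Longrightarrow> g j s \<ge> 0) \<Longrightarrow> g' i t > 0"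
    and "i < N" "t \<ge> a"
  shows "g i t > 0"
proof (rule ccontr)
  assume "\<not> g i t > 0"
  have cont: "continuous_on {a..} (g j)" if "j < N" for j
    using deriv[OF that] by (intro DERIV_continuous_on) auto
  obtain t\<^sub>0 k where "a < t\<^sub>0" "k < N" "g k t\<^sub>0 = 0"
    and before: "\<And>j s. j < N \<Longrightarrow> a \<le> s \<Longrightarrow> s < t\<^sub>0 \<Longrightarrow> g j s > 0"
    and upto: "\<And>j s. j < N \<Longrightarrow> a \<le> s \<Longrightarrow> s \<le> t\<^sub>0 \<Longrightarrow> g j s \<ge> 0"
    by (rule first_nonpositive_time[where g=g and N=N and a=a and i=i and t=t])
      (use cont init \<open>i < N\<close> \<open>t \<ge> a\<close> \<open>\<not> g i t > 0\<close> in auto)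
  have "g' k t\<^sub>0 > 0" using first_zero[OF \<open>k < N\<close> \<open>a < t\<^sub>0\<close> \<open>g k t\<^sub>0 = 0\<close> upto] .
  then obtain e where "e > 0" and incr: "\<forall>h>0. t\<^sub>0 - h \<in> {a..} \<longrightarrow> h < e \<longrightarrow> g k (t\<^sub>0 - h) < g k t\<^sub>0"
    using has_real_derivative_pos_inc_left[OF deriv[OF \<open>k < N\<close> less_imp_le[OF \<open>a < t\<^sub>0\<close>]]] by blast
  define h where "h = min (e / 2) (t\<^sub>0 - a)"
  have "h > 0" "t\<^sub>0 - h \<in> {a..}" "h < e" using \<open>e > 0\<close> \<open>a < t\<^sub>0\<close> by (auto simp: h_def)
  then have "g k (t\<^sub>0 - h) < 0" using incr \<open>g k t\<^sub>0 = 0\<close> by force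
  moreover have "g k (t\<^sub>0 - h) > 0" using before[OF \<open>k < N\<close>] \<open>h > 0\<close> \<open>t\<^sub>0 - h \<in> {a..}\<close> by auto
  ultimately show False by simp
qed

section \<open>Exponential decay\<close>

definition exp_decay :: "(real \<Rightarrow> real) \<Rightarrow> bool" where
  "exp_decay f \<longleftrightarrow> (\<exists>C \<gamma>. \<gamma> > 0 \<and> (\<forall>\<^sub>F t in at_top. f t \<le> C * exp (- \<gamma> * t)))"

lemma exp_decayI:
  assumes "\<gamma> > 0" "\<And>t. t \<ge> T \<Longrightarrow> f t \<le> C * exp (- \<gamma> * t)"
  shows "exp_decay f"
  unfolding exp_decay_def using assms by (auto simp: eventually_at_top_linorder)

lemma exp_decayE:
  assumes "exp_decay f"
  obtains C \<gamma> T where "C \<ge> 0" "\<gamma> > 0" "T \<ge> 0" "\<And>t. t \<ge> T \<Longrightarrow> f t \<le> C * exp (- \<gamma> * t)"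
proof -
  obtain C \<gamma> T where "\<gamma> > 0" and bound: "\<And>t. t \<ge> T \<Longrightarrow> f t \<le> C * exp (- \<gamma> * t)"
    using assms by (auto simp: exp_decay_def eventually_at_top_linorder)
  have "f t \<le> \<bar>C\<bar> * exp (- \<gamma> * t)" if "t \<ge> max T 0" for t
    using bound[of t] that by (smt (verit) exp_gt_zero mult_right_mono abs_ge_self max.boundedE)
  then show thesis using that[of "\<bar>C\<bar>" \<gamma> "max T 0"] \<open>\<gamma> > 0\<close> by auto
qed

lemma exp_decay_mono:
  assumes "exp_decay g" "\<forall>\<^sub>F t in at_top. f t \<le> g t"
  shows "exp_decay f"
proof -
  obtain C \<gamma> where "\<gamma> > 0" and bound: "\<forall>\<^sub>F t in at_top. g t \<le> C * exp (- \<gamma> * t)"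
    using assms(1) by (auto simp: exp_decay_def)
  from assms(2) bound have "\<forall>\<^sub>F t in at_top. f t \<le> C * exp (- \<gamma> * t)"
    by eventually_elim simp
  with \<open>\<gamma> > 0\<close> show ?thesis by (auto simp: exp_decay_def)
qed

lemma exp_decay_zero: "exp_decay (\<lambda>_. 0)"
  by (rule exp_decayI[of 1 0 _ 0]) auto

lemma exp_decay_add:
  assumes "exp_decay f" "exp_decay g"
  shows "exp_decay (\<lambda>t. f t + g t)"
proof -
  obtain C\<^sub>1 \<gamma>\<^sub>1 T\<^sub>1 where "C\<^sub>1 \<ge> 0" "\<gamma>\<^sub>1 > 0" "T\<^sub>1 \<ge> 0" "\<And>t. t \<ge> T\<^sub>1 \<Longrightarrow> f t \<le> C\<^sub>1 * exp (- \<gamma>\<^sub>1 * t)"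
    using assms(1) by (elim exp_decayE) blast
  moreover obtain C\<^sub>2 \<gamma>\<^sub>2 T\<^sub>2 where "C\<^sub>2 \<ge> 0" "\<gamma>\<^sub>2 > 0" "T\<^sub>2 \<ge> 0" "\<And>t. t \<ge> T\<^sub>2 \<Longrightarrow> g t \<le> C\<^sub>2 * exp (- \<gamma>\<^sub>2 * t)"
    using assms(2) by (elim exp_decayE) blast
  moreover have "exp (- \<gamma>\<^sub>i * t) \<le> exp (- min \<gamma>\<^sub>1 \<gamma>\<^sub>2 * t)" if "\<gamma>\<^sub>i \<ge> min \<gamma>\<^sub>1 \<gamma>\<^sub>2" "t \<ge> 0" for \<gamma>\<^sub>i t
    using that by (simp add: mult_right_mono)
  ultimately have "f t + g t \<le> (C\<^sub>1 + C\<^sub>2) * exp (- min \<gamma>\<^sub>1 \<gamma>\<^sub>2 * t)" if "t \<ge> max T\<^sub>1 T\<^sub>2" for t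
    using that by (smt (verit, best) distrib_right max.boundedE min.cobounded1 min.cobounded2 mult_left_mono)
  then show ?thesis
    using \<open>\<gamma>\<^sub>1 > 0\<close> \<open>\<gamma>\<^sub>2 > 0\<close> by (intro exp_decayI[of "min \<gamma>\<^sub>1 \<gamma>\<^sub>2" "max T\<^sub>1 T\<^sub>2"]) auto
qed

lemma exp_decay_sum:
  assumes "finite I" "\<And>i. i \<in> I \<Longrightarrow> exp_decay (f i)"
  shows "exp_decay (\<lambda>t. \<Sum>i\<in>I. f i t)"
  using assms by (induction I rule: finite_induct) (auto intro: exp_decay_add exp_decay_zero)

lemma exp_decay_cmult:
  assumes "c \<ge> 0" "exp_decay f"
  shows "exp_decay (\<lambda>t. c * f t)"
proof -
  obtain C \<gamma> T where "\<gamma> > 0" "\<And>t. t \<ge> T \<Longrightarrow> f t \<le> C * exp (- \<gamma> * t)"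
    using assms(2) by (elim exp_decayE) blast
  then show ?thesis
    using \<open>c \<ge> 0\<close> by (intro exp_decayI[of \<gamma> T _ "c * C"]) (auto simp: mult.assoc intro: mult_left_mono)
qed

lemma exp_decay_square:
  assumes "exp_decay (\<lambda>t. \<bar>f t\<bar>)"
  shows "exp_decay (\<lambda>t. (f t)\<^sup>2)"
proof -
  obtain C \<gamma> T where "\<gamma> > 0" and bound: "\<And>t. t \<ge> T \<Longrightarrow> \<bar>f t\<bar> \<le> C * exp (- \<gamma> * t)"
    using assms by (elim exp_decayE) blast
  have "(f t)\<^sup>2 \<le> C\<^sup>2 * exp (- (2 * \<gamma>) * t)" if "t \<ge> T" for t
  proof -
    have "(f t)\<^sup>2 \<le> (C * exp (- \<gamma> * t))\<^sup>2"
      using bound[OF that] by (metis abs_ge_zero power2_abs power_mono)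
    also have "\<dots> = C\<^sup>2 * exp (- (2 * \<gamma>) * t)"
      by (simp add: power_mult_distrib flip: exp_of_nat_mult)
    finally show ?thesis .
  qed
  then show ?thesis using \<open>\<gamma> > 0\<close> by (intro exp_decayI[of "2 * \<gamma>" T]) auto
qed

lemma exp_decay_abs_of_square:
  assumes "exp_decay (\<lambda>t. (f t)\<^sup>2)"
  shows "exp_decay (\<lambda>t. \<bar>f t\<bar>)"
proof -
  obtain C \<gamma> T where "C \<ge> 0" "\<gamma> > 0" and bound: "\<And>t. t \<ge> T \<Longrightarrow> (f t)\<^sup>2 \<le> C * exp (- \<gamma> * t)"
    using assms by (elim exp_decayE) blast
  have "\<bar>f t\<bar> \<le> sqrt C * exp (- (\<gamma> / 2) * t)" if "t \<ge> T" for t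
  proof (rule power2_le_imp_le)
    have "(sqrt C * exp (- (\<gamma> / 2) * t))\<^sup>2 = C * exp (- \<gamma> * t)"
      using \<open>C \<ge> 0\<close> by (simp add: power_mult_distrib flip: exp_of_nat_mult)
    then show "\<bar>f t\<bar>\<^sup>2 \<le> (sqrt C * exp (- (\<gamma> / 2) * t))\<^sup>2"
      using bound[OF that] by simp
  qed (use \<open>C \<ge> 0\<close> in simp)
  then show ?thesis using \<open>\<gamma> > 0\<close> by (intro exp_decayI[of "\<gamma> / 2" T]) auto
qed

lemma tendsto_mult_exp_neg_at_top:
  fixes \<gamma> C :: real
  assumes "\<gamma> > 0"
  shows "((\<lambda>t. C * exp (- \<gamma> * t)) \<longlongrightarrow> 0) at_top"
proof -
  have "filterlim (\<lambda>t. \<gamma> * t) at_top at_top"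
    using assms by (intro filterlim_tendsto_pos_mult_at_top[OF tendsto_const] filterlim_ident)
  then have "filterlim (\<lambda>t. - \<gamma> * t) at_bot at_top"
    by (simp add: filterlim_uminus_at_bot)
  then show ?thesis
    by (intro tendsto_mult_right_zero filterlim_compose[OF exp_at_bot])
qed

lemma exp_decay_eventually_less:
  assumes "exp_decay f" "\<epsilon> > 0"
  shows "\<forall>\<^sub>F t in at_top. f t < \<epsilon>"
proof -
  obtain C \<gamma> where "\<gamma> > 0" and bound: "\<forall>\<^sub>F t in at_top. f t \<le> C * exp (- \<gamma> * t)"
    using assms(1) by (auto simp: exp_decay_def)
  have "\<forall>\<^sub>F t in at_top. C * exp (- \<gamma> * t) < \<epsilon>"
    using tendsto_mult_exp_neg_at_top[OF \<open>\<gamma> > 0\<close>] \<open>\<epsilon> > 0\<close> by (rule order_tendstoD)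
  with bound show ?thesis by eventually_elim simp
qed

lemma exp_decay_imp_tendsto:
  fixes f :: "real \<Rightarrow> 'a::real_normed_vector"
  assumes "exp_decay (\<lambda>t. norm (f t - L))"
  shows "(f \<longlongrightarrow> L) at_top"
proof -
  obtain C \<gamma> where "\<gamma> > 0" and bound: "\<forall>\<^sub>F t in at_top. norm (f t - L) \<le> C * exp (- \<gamma> * t)"
    using assms by (auto simp: exp_decay_def)
  have "((\<lambda>t. f t - L) \<longlongrightarrow> 0) at_top"
    using Lim_null_comparison[OF bound tendsto_mult_exp_neg_at_top[OF \<open>\<gamma> > 0\<close>]] .
  then show ?thesis by (rule LIM_zero_cancel)
qed

lemma exp_decay_uniform_bound:
  assumes "exp_decay f" "\<And>t. t \<ge> 0 \<Longrightarrow> f t \<le> B"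
  obtains C \<gamma> where "C > 0" "\<gamma> > 0" "\<And>t. t \<ge> 0 \<Longrightarrow> f t \<le> C * exp (- \<gamma> * t)"
proof -
  obtain C \<gamma> T where "C \<ge> 0" "\<gamma> > 0" "T \<ge> 0" and tail: "\<And>t. t \<ge> T \<Longrightarrow> f t \<le> C * exp (- \<gamma> * t)"
    using assms(1) by (elim exp_decayE) blast
  define C' where "C' = (C + \<bar>B\<bar> + 1) * exp (\<gamma> * T)"
  have pos: "C + \<bar>B\<bar> + 1 > 0" using \<open>C \<ge> 0\<close> by (smt (verit) abs_ge_zero)
  have "f t \<le> C' * exp (- \<gamma> * t)" if "t \<ge> 0" for t
  proof (cases "t \<ge> T")
    case True
    have "C \<le> C + \<bar>B\<bar> + 1" by simp
    also have "\<dots> \<le> C'"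
      unfolding C'_def using pos \<open>\<gamma> > 0\<close> \<open>T \<ge> 0\<close> by (simp add: mult_le_cancel_left1)
    finally show ?thesis using tail[OF True] by (smt (verit) exp_gt_zero mult_right_mono)
  next
    case False
    have "f t \<le> (C + \<bar>B\<bar> + 1) * 1" using assms(2)[OF that] \<open>C \<ge> 0\<close> by simp
    also have "\<dots> \<le> (C + \<bar>B\<bar> + 1) * exp (\<gamma> * (T - t))"
      using False \<open>C \<ge> 0\<close> \<open>\<gamma> > 0\<close> by (intro mult_left_mono) auto
    also have "\<dots> = C' * exp (- \<gamma> * t)"
      by (simp add: C'_def mult.assoc right_diff_distrib flip: exp_add)
    finally show ?thesis .
  qed
  moreover have "C' > 0" using pos by (simp add: C'_def)
  ultimately show thesis using that \<open>\<gamma> > 0\<close> by blast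
qed

lemma exp_decay_uniform_bound_finite:
  assumes "finite I" "\<And>i. i \<in> I \<Longrightarrow> exp_decay (f i)"
    and bounded: "\<And>i t. i \<in> I \<Longrightarrow> t \<ge> 0 \<Longrightarrow> 0 \<le> f i t \<and> f i t \<le> B"
  obtains C \<gamma> where "C > 0" "\<gamma> > 0" "\<And>i t. i \<in> I \<Longrightarrow> t \<ge> 0 \<Longrightarrow> f i t \<le> C * exp (- \<gamma> * t)"
proof -
  obtain C \<gamma> where "C > 0" "\<gamma> > 0"
    and sum_bound: "\<And>t. t \<ge> 0 \<Longrightarrow> (\<Sum>i\<in>I. f i t) \<le> C * exp (- \<gamma> * t)"
  proof (rule exp_decay_uniform_bound)
    show "exp_decay (\<lambda>t. \<Sum>i\<in>I. f i t)" using assms(1,2) by (rule exp_decay_sum)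
    show "(\<Sum>i\<in>I. f i t) \<le> (\<Sum>i\<in>I. B)" if "t \<ge> 0" for t
      using bounded that by (intro sum_mono) auto
  qed blast
  have "f i t \<le> (\<Sum>i\<in>I. f i t)" if "i \<in> I" "t \<ge> 0" for i t
    using that bounded assms(1) by (intro member_le_sum) auto
  with sum_bound show thesis using that \<open>C > 0\<close> \<open>\<gamma> > 0\<close> by (meson order_trans)
qed

text \<open>Comparison with \<open>B e\<^sup>-\<^sup>\<nu>\<^sup>t\<close>, a supersolution of \<open>y' = - \<alpha> y + K e\<^sup>-\<^sup>\<mu>\<^sup>t\<close> for
  \<open>\<nu> = min \<alpha> \<mu> / 2\<close>: the difference \<open>(f - B e\<^sup>-\<^sup>\<nu>\<^sup>t) e\<^sup>\<alpha>\<^sup>t\<close> is nonincreasing.\<close>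

lemma differential_inequality_exp_bound:
  fixes f f' :: "real \<Rightarrow> real"
  assumes deriv: "\<And>t. t \<ge> a \<Longrightarrow> (f has_real_derivative f' t) (at t within {a..})"
    and ineq: "\<And>t. t \<ge> a \<Longrightarrow> f' t \<le> - \<alpha> * f t + K * exp (- \<mu> * t)"
    and "\<alpha> > 0" "\<mu> > 0" "K \<ge> 0" "a \<ge> 0"
  shows "exp_decay f"
proof -
  define \<nu> where "\<nu> = min \<alpha> \<mu> / 2"
  have \<nu>: "\<nu> > 0" "\<nu> < \<alpha>" "\<nu> \<le> \<mu>" using \<open>\<alpha> > 0\<close> \<open>\<mu> > 0\<close> by (auto simp: \<nu>_def)
  define B where "B = K / (\<alpha> - \<nu>)"
  have B: "B \<ge> 0" "(\<alpha> - \<nu>) * B = K" using \<nu> \<open>K \<ge> 0\<close> by (auto simp: B_def)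
  define g where "g t = - (f t - B * exp (- \<nu> * t)) * exp (\<alpha> * t)" for t
  define g' where "g' t = - (exp (\<alpha> * t) * (f' t + \<alpha> * f t - K * exp (- \<nu> * t)))" for t
  have deriv_g: "(g has_real_derivative g' t) (at t within {a..})" if "t \<ge> a" for t
  proof -
    have "(g has_real_derivative (- f' t - exp (- \<nu> * t) * \<nu> * B) * exp (\<alpha> * t)
        + exp (\<alpha> * t) * \<alpha> * (B * exp (- \<nu> * t) - f t)) (at t within {a..})"
      unfolding g_def by (rule derivative_eq_intros refl deriv[OF that] | simp)+
    moreover have "(- f' t - exp (- \<nu> * t) * \<nu> * B) * exp (\<alpha> * t)
        + exp (\<alpha> * t) * \<alpha> * (B * exp (- \<nu> * t) - f t) = g' t"
      unfolding g'_def B(2)[symmetric] by (simp add: algebra_simps)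
    ultimately show ?thesis by simp
  qed
  have g'_nonneg: "g' t \<ge> 0" if "t \<ge> a" for t
  proof -
    have "exp (- \<mu> * t) \<le> exp (- \<nu> * t)"
      using \<nu> that \<open>a \<ge> 0\<close> by (auto intro: mult_right_mono)
    then have "K * exp (- \<mu> * t) \<le> K * exp (- \<nu> * t)"
      using \<open>K \<ge> 0\<close> by (rule mult_left_mono)
    then have "f' t + \<alpha> * f t - K * exp (- \<nu> * t) \<le> 0"
      using ineq[OF that] by linarith
    then show ?thesis by (simp add: g'_def mult_nonneg_nonpos)
  qed
  have mono: "g a \<le> g t" if "t \<ge> a" for t
    by (rule DERIV_nonneg_imp_nondecreasing_atLeast[OF deriv_g g'_nonneg]) (use that in auto)
  define C where "C = B + \<bar>f a - B * exp (- \<nu> * a)\<bar> * exp (\<alpha> * a)"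
  have "f t \<le> C * exp (- \<nu> * t)" if "t \<ge> a" for t
  proof -
    have "f t - B * exp (- \<nu> * t) \<le> (f a - B * exp (- \<nu> * a)) * exp (\<alpha> * a) * exp (- \<alpha> * t)"
      using mono[OF that] by (simp add: g_def exp_minus field_simps)
    also have "\<dots> \<le> \<bar>f a - B * exp (- \<nu> * a)\<bar> * exp (\<alpha> * a) * exp (- \<alpha> * t)"
      by (intro mult_right_mono) auto
    also have "\<dots> \<le> \<bar>f a - B * exp (- \<nu> * a)\<bar> * exp (\<alpha> * a) * exp (- \<nu> * t)"
      using \<nu> that \<open>a \<ge> 0\<close> by (intro mult_left_mono) (auto intro: mult_right_mono)
    finally show ?thesis by (simp add: C_def algebra_simps)
  qed
  then show ?thesis using \<nu> by (intro exp_decayI[of \<nu> a]) auto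
qed

lemma exp_decay_of_differential_inequality:
  fixes f f' g :: "real \<Rightarrow> real"
  assumes deriv: "\<And>t. t \<ge> a \<Longrightarrow> (f has_real_derivative f' t) (at t within {a..})"
    and ineq: "\<And>t. t \<ge> a \<Longrightarrow> f' t \<le> - \<alpha> * f t + g t"
    and "\<alpha> > 0" "exp_decay g"
  shows "exp_decay f"
proof -
  obtain K \<mu> T where "K \<ge> 0" "\<mu> > 0" "T \<ge> 0" and g: "\<And>t. t \<ge> T \<Longrightarrow> g t \<le> K * exp (- \<mu> * t)"
    using \<open>exp_decay g\<close> by (elim exp_decayE) blast
  let ?a = "max a T"
  show ?thesis
  proof (rule differential_inequality_exp_bound[of ?a f f' \<alpha> K \<mu>])
    show "(f has_real_derivative f' t) (at t within {?a..})" if "t \<ge> ?a" for t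
      using that by (intro DERIV_subset[OF deriv]) auto
    show "f' t \<le> - \<alpha> * f t + K * exp (- \<mu> * t)" if "t \<ge> ?a" for t
      using ineq[of t] g[of t] that by auto
  qed (use \<open>\<alpha> > 0\<close> \<open>\<mu> > 0\<close> \<open>K \<ge> 0\<close> \<open>T \<ge> 0\<close> in auto)
qed

lemma differential_inequality_exp_growth:
  fixes f f' :: "real \<Rightarrow> real"
  assumes deriv: "\<And>t. t \<ge> a \<Longrightarrow> (f has_real_derivative f' t) (at t within {a..})"
    and ineq: "\<And>t. t \<ge> a \<Longrightarrow> f' t \<ge> b * f t" and "a \<le> t"
  shows "f t \<ge> f a * exp (b * (t - a))"
proof -
  let ?g = "\<lambda>t. f t * exp (- b * t)"
  have "?g a \<le> ?g t"
  proof (rule DERIV_nonneg_imp_nondecreasing_atLeast[where a=a and f="?g"])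
    show "(?g has_real_derivative f' s * exp (- b * s) + (- b * exp (- b * s)) * f s) (at s within {a..})"
      if "s \<ge> a" for s
      by (intro DERIV_mult deriv that) (auto intro!: derivative_eq_intros)
    show "f' s * exp (- b * s) + (- b * exp (- b * s)) * f s \<ge> 0" if "s \<ge> a" for s
      using ineq[OF that] by (simp add: algebra_simps)
  qed (use \<open>a \<le> t\<close> in auto)
  then have "f a * exp (- b * a) * exp (b * t) \<le> f t"
    using mult_right_mono[of "?g a" "?g t" "exp (b * t)"] by (simp add: mult.assoc flip: exp_add)
  then show ?thesis by (simp add: mult.assoc right_diff_distrib flip: exp_add)
qed

lemma exp_growth_exceeds:
  fixes a b B T :: real
  assumes "a > 0" "b > 0"
  obtains t where "t \<ge> T" "a * exp (b * (t - T)) > B"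
proof
  define t where "t = T + \<bar>B\<bar> / a / b"
  show "t \<ge> T" using assms by (simp add: t_def)
  have "B < a + \<bar>B\<bar>" using assms by linarith
  also have "\<dots> = a * (1 + \<bar>B\<bar> / a)" using assms by (simp add: field_simps)
  also have "\<dots> \<le> a * exp (b * (t - T))"
    using assms exp_ge_add_one_self[of "\<bar>B\<bar> / a"] by (simp add: t_def)
  finally show "a * exp (b * (t - T)) > B" .
qed

lemma norm_diff_le_of_exp_bounded_derivative:
  fixes f f' :: "real \<Rightarrow> 'a::real_inner"
  assumes deriv: "\<And>\<tau>. \<tau> \<ge> s \<Longrightarrow> (f has_vector_derivative f' \<tau>) (at \<tau> within {s..})"
    and bound: "\<And>\<tau>. \<tau> \<ge> s \<Longrightarrow> norm (f' \<tau>) \<le> C * exp (- \<gamma> * \<tau>)"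
    and "\<gamma> > 0" "s \<le> t"
  shows "norm (f t - f s) \<le> C / \<gamma> * exp (- \<gamma> * s)"
proof -
  have "0 \<le> C * exp (- \<gamma> * s)" using bound[of s] norm_ge_zero[of "f' s"] by linarith
  then have "C \<ge> 0" by (simp add: zero_le_mult_iff)
  show ?thesis
  proof (cases "f t = f s")
    case True
    then show ?thesis using \<open>C \<ge> 0\<close> \<open>\<gamma> > 0\<close> by simp
  next
    case False
    define u where "u = (1 / norm (f t - f s)) *\<^sub>R (f t - f s)"
    have "norm u = 1" using False by (simp add: u_def)
    let ?h = "\<lambda>\<tau>. - (u \<bullet> f \<tau>) - C / \<gamma> * exp (- \<gamma> * \<tau>)"
    have "?h s \<le> ?h t"
    proof (rule DERIV_nonneg_imp_nondecreasing_atLeast[where a=s and f="?h"])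
      show "(?h has_real_derivative - (u \<bullet> f' \<tau>) - C / \<gamma> * (- \<gamma> * exp (- \<gamma> * \<tau>))) (at \<tau> within {s..})"
        if "\<tau> \<ge> s" for \<tau>
      proof -
        have "((\<lambda>\<tau>. u \<bullet> f \<tau>) has_real_derivative u \<bullet> f' \<tau>) (at \<tau> within {s..})"
          using has_real_derivative_inner[OF has_vector_derivative_const deriv[OF that], of u] by simp
        moreover have "((\<lambda>\<tau>. exp (- \<gamma> * \<tau>)) has_real_derivative - \<gamma> * exp (- \<gamma> * \<tau>)) (at \<tau> within {s..})"
          by (auto intro!: derivative_eq_intros)
        ultimately show ?thesis by (intro DERIV_diff DERIV_minus DERIV_cmult)
      qed
      show "- (u \<bullet> f' \<tau>) - C / \<gamma> * (- \<gamma> * exp (- \<gamma> * \<tau>)) \<ge> 0" if "\<tau> \<ge> s" for \<tau>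
      proof -
        have "u \<bullet> f' \<tau> \<le> norm u * norm (f' \<tau>)" by (rule norm_cauchy_schwarz)
        also have "\<dots> \<le> C * exp (- \<gamma> * \<tau>)" using \<open>norm u = 1\<close> bound[OF that] by simp
        finally show ?thesis using \<open>\<gamma> > 0\<close> by simp
      qed
    qed (use \<open>s \<le> t\<close> in auto)
    moreover have "u \<bullet> (f t - f s) = norm (f t - f s)"
      using False by (simp add: u_def power2_norm_eq_inner[symmetric] power2_eq_square)
    moreover have "0 \<le> C / \<gamma> * exp (- \<gamma> * t)" using \<open>C \<ge> 0\<close> \<open>\<gamma> > 0\<close> by simp
    ultimately show ?thesis by (simp add: inner_diff_right)
  qed
qed

lemma exp_convergence_of_increment_bound:
  fixes f :: "real \<Rightarrow> 'a::{real_normed_vector, complete_space}"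
  assumes "\<gamma> > 0" and incr: "\<And>s t. T \<le> s \<Longrightarrow> s \<le> t \<Longrightarrow> norm (f t - f s) \<le> C * exp (- \<gamma> * s)"
  obtains L where "exp_decay (\<lambda>t. norm (f t - L))"
proof -
  have cauchy: "cauchy_filter (filtermap f at_top)"
    unfolding cauchy_filter_metric_filtermap
  proof (intro allI impI)
    fix \<epsilon> :: real assume "\<epsilon> > 0"
    have "\<forall>\<^sub>F s in at_top. 2 * C * exp (- \<gamma> * s) < \<epsilon>"
      using tendsto_mult_exp_neg_at_top[OF \<open>\<gamma> > 0\<close>] \<open>\<epsilon> > 0\<close> by (rule order_tendstoD)
    then obtain S where S: "\<And>s. s \<ge> S \<Longrightarrow> 2 * C * exp (- \<gamma> * s) < \<epsilon>"
      by (auto simp: eventually_at_top_linorder)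
    define S' where "S' = max S T"
    have "dist (f y) (f z) < \<epsilon>" if "y \<ge> S'" "z \<ge> S'" for y z
    proof -
      have "dist (f y) (f z) \<le> norm (f y - f S') + norm (f z - f S')"
        using norm_triangle_ineq4[of "f y - f S'" "f z - f S'"] by (simp add: dist_norm)
      also have "\<dots> \<le> 2 * C * exp (- \<gamma> * S')"
        using incr[of S' y] incr[of S' z] that by (simp add: S'_def)
      also have "\<dots> < \<epsilon>" using S[of S'] by (simp add: S'_def)
      finally show ?thesis .
    qed
    then show "\<exists>P. eventually P at_top \<and> (\<forall>y z. P y \<and> P z \<longrightarrow> dist (f y) (f z) < \<epsilon>)"
      by (intro exI[of _ "\<lambda>y. y \<ge> S'"]) auto
  qed
  moreover have "filtermap f at_top \<noteq> bot" by (simp add: filtermap_bot_iff)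
  ultimately obtain L where "filtermap f at_top \<le> nhds L"
    using cauchy_filter_complete_converges[OF cauchy complete_UNIV] by auto
  then have lim: "(f \<longlongrightarrow> L) at_top" by (simp add: filterlim_def)
  have "norm (L - f t) \<le> C * exp (- \<gamma> * t)" if "t \<ge> T" for t
  proof (rule tendsto_upperbound)
    show "((\<lambda>s. norm (f s - f t)) \<longlongrightarrow> norm (L - f t)) at_top" by (intro tendsto_intros lim)
    show "\<forall>\<^sub>F s in at_top. norm (f s - f t) \<le> C * exp (- \<gamma> * t)"
      using incr[OF that] by (auto simp: eventually_at_top_linorder)
  qed simp
  then have "norm (f t - L) \<le> C * exp (- \<gamma> * t)" if "t \<ge> T" for t
    using that by (simp add: norm_minus_commute)
  then show thesis using that \<open>\<gamma> > 0\<close> by (blast intro: exp_decayI)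
qed

lemma exp_convergence_of_exp_decaying_derivative:
  fixes f f' :: "real \<Rightarrow> 'a::{real_inner, complete_space}"
  assumes deriv: "\<And>t. t \<ge> a \<Longrightarrow> (f has_vector_derivative f' t) (at t within {a..})"
    and decay: "exp_decay (\<lambda>t. norm (f' t))"
  obtains L where "exp_decay (\<lambda>t. norm (f t - L))"
proof -
  obtain C \<gamma> T where "\<gamma> > 0" and bound: "\<And>t. t \<ge> T \<Longrightarrow> norm (f' t) \<le> C * exp (- \<gamma> * t)"
    using decay by (elim exp_decayE) blast
  have incr: "norm (f t - f s) \<le> C / \<gamma> * exp (- \<gamma> * s)" if "max a T \<le> s" "s \<le> t" for s t
    using that \<open>\<gamma> > 0\<close>
    by (intro norm_diff_le_of_exp_bounded_derivative[where f'=f'] bound)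
      (auto intro!: has_vector_derivative_within_subset[OF deriv])
  show thesis by (rule exp_convergence_of_increment_bound[OF \<open>\<gamma> > 0\<close> incr that])
qed

lemma double_sum_antisym_inner:
  fixes y z :: "nat \<Rightarrow> 'a::real_inner" and w :: "nat \<Rightarrow> nat \<Rightarrow> real"
  assumes "\<And>i j. i < N \<Longrightarrow> j < N \<Longrightarrow> w i j = w j i"
  shows "(\<Sum>i<N. \<Sum>j<N. w i j * ((y j - y i) \<bullet> z i)) =
         - (1/2) * (\<Sum>i<N. \<Sum>j<N. w i j * ((y j - y i) \<bullet> (z j - z i)))"
proof -
  let ?S = "\<Sum>i<N. \<Sum>j<N. w i j * ((y j - y i) \<bullet> z i)"
  have "?S = (\<Sum>j<N. \<Sum>i<N. w i j * ((y j - y i) \<bullet> z i))" by (rule sum.swap)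
  also have "\<dots> = - (\<Sum>i<N. \<Sum>j<N. w i j * ((y j - y i) \<bullet> z j))"
    using assms by (simp add: sum_negf[symmetric] inner_diff_left algebra_simps)
  finally have "2 * ?S = (\<Sum>i<N. \<Sum>j<N. w i j * ((y j - y i) \<bullet> z i) - w i j * ((y j - y i) \<bullet> z j))"
    by (simp add: sum_subtractf)
  also have "\<dots> = - (\<Sum>i<N. \<Sum>j<N. w i j * ((y j - y i) \<bullet> (z j - z i)))"
    by (simp add: sum_negf[symmetric] inner_diff_right algebra_simps)
  finally show ?thesis by simp
qed

lemma double_sum_weighted_square_diff:
  fixes m u :: "nat \<Rightarrow> real"
  shows "(\<Sum>i<N. \<Sum>j<N. m i * m j * (u j - u i)\<^sup>2) =
         2 * (\<Sum>i<N. m i) * (\<Sum>i<N. m i * (u i)\<^sup>2) - 2 * (\<Sum>i<N. m i * u i)\<^sup>2"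
proof -
  have "(\<Sum>i<N. \<Sum>j<N. m i * m j * (u j - u i)\<^sup>2) =
        (\<Sum>i<N. \<Sum>j<N. m i * (m j * (u j)\<^sup>2)) + (\<Sum>i<N. \<Sum>j<N. (m i * (u i)\<^sup>2) * m j)
         - 2 * (\<Sum>i<N. \<Sum>j<N. (m i * u i) * (m j * u j))"
    by (simp add: sum.distrib sum_subtractf sum_distrib_left power2_eq_square algebra_simps)
  also have "(\<Sum>i<N. \<Sum>j<N. m i * (m j * (u j)\<^sup>2)) = (\<Sum>i<N. m i) * (\<Sum>i<N. m i * (u i)\<^sup>2)"
    by (rule sum_product[symmetric])
  also have "(\<Sum>i<N. \<Sum>j<N. (m i * (u i)\<^sup>2) * m j) = (\<Sum>i<N. m i * (u i)\<^sup>2) * (\<Sum>i<N. m i)"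
    by (rule sum_product[symmetric])
  also have "(\<Sum>i<N. \<Sum>j<N. (m i * u i) * (m j * u j)) = (\<Sum>i<N. m i * u i)\<^sup>2"
    by (simp add: sum_product[symmetric] power2_eq_square)
  finally show ?thesis by (simp add: algebra_simps)
qed

lemma inner_norm_powr_scaleR_monotone:
  fixes a b :: "'a::real_inner"
  assumes "p \<ge> 0"
  shows "(a - b) \<bullet> ((norm a powr p) *\<^sub>R a - (norm b powr p) *\<^sub>R b) \<ge> 0"
proof -
  define A B where "A = norm a powr p" and "B = norm b powr p"
  have "A \<ge> 0" "B \<ge> 0" by (auto simp: A_def B_def)
  have "(A * norm a - B * norm b) * (norm a - norm b) \<ge> 0"
  proof (cases "norm a \<ge> norm b")
    case True
    then have "A \<ge> B" unfolding A_def B_def using assms by (intro powr_mono2) auto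
    then have "A * norm a \<ge> B * norm b" using True \<open>B \<ge> 0\<close> by (intro mult_mono) auto
    then show ?thesis using True by simp
  next
    case False
    then have "A \<le> B" unfolding A_def B_def using assms by (intro powr_mono2) auto
    then have "A * norm a \<le> B * norm b" using False \<open>A \<ge> 0\<close> by (intro mult_mono) auto
    then show ?thesis using False by (simp add: mult_nonpos_nonpos)
  qed
  also have "\<dots> = A * (norm a)\<^sup>2 - (A + B) * (norm a * norm b) + B * (norm b)\<^sup>2"
    by (simp add: power2_eq_square algebra_simps)
  also have "\<dots> \<le> A * (norm a)\<^sup>2 - (A + B) * (a \<bullet> b) + B * (norm b)\<^sup>2"
    using \<open>A \<ge> 0\<close> \<open>B \<ge> 0\<close> Cauchy_Schwarz_ineq2[of a b] by (simp add: mult_left_mono)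
  also have "\<dots> = (a - b) \<bullet> (A *\<^sub>R a - B *\<^sub>R b)"
    using inner_commute[of a b]
    by (simp add: inner_diff_left inner_diff_right power2_norm_eq_inner algebra_simps)
  finally show ?thesis by (simp add: A_def B_def)
qed

lemma inner_friction_difference_le:
  fixes a b :: "'a::real_inner"
  assumes "p \<ge> 0" "norm a \<le> Q" "norm b \<le> Q"
  shows "(a - b) \<bullet> ((\<alpha> - norm a powr p) *\<^sub>R a - (\<beta> - norm b powr p) *\<^sub>R b)
         \<le> c * (norm (a - b))\<^sup>2 + 2 * Q\<^sup>2 * (\<bar>\<alpha> - c\<bar> + \<bar>\<beta> - c\<bar>)"
proof -
  have split: "(\<alpha> - norm a powr p) *\<^sub>R a - (\<beta> - norm b powr p) *\<^sub>R b =
     c *\<^sub>R (a - b) + ((\<alpha> - c) *\<^sub>R a - (\<beta> - c) *\<^sub>R b) - ((norm a powr p) *\<^sub>R a - (norm b powr p) *\<^sub>R b)"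
    by (simp add: algebra_simps)
  have "Q \<ge> 0" using assms(2) norm_ge_zero[of a] by linarith
  have "(a - b) \<bullet> ((\<alpha> - c) *\<^sub>R a - (\<beta> - c) *\<^sub>R b) \<le> norm (a - b) * norm ((\<alpha> - c) *\<^sub>R a - (\<beta> - c) *\<^sub>R b)"
    by (rule norm_cauchy_schwarz)
  also have "\<dots> \<le> (2 * Q) * (\<bar>\<alpha> - c\<bar> * Q + \<bar>\<beta> - c\<bar> * Q)"
  proof (rule mult_mono)
    show "norm (a - b) \<le> 2 * Q" using assms(2,3) norm_triangle_ineq4[of a b] by linarith
    have "norm ((\<alpha> - c) *\<^sub>R a - (\<beta> - c) *\<^sub>R b) \<le> norm ((\<alpha> - c) *\<^sub>R a) + norm ((\<beta> - c) *\<^sub>R b)"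
      by (rule norm_triangle_ineq4)
    also have "\<dots> \<le> \<bar>\<alpha> - c\<bar> * Q + \<bar>\<beta> - c\<bar> * Q"
      using assms(2,3) by (auto intro!: add_mono mult_left_mono)
    finally show "norm ((\<alpha> - c) *\<^sub>R a - (\<beta> - c) *\<^sub>R b) \<le> \<bar>\<alpha> - c\<bar> * Q + \<bar>\<beta> - c\<bar> * Q" .
  qed (use \<open>Q \<ge> 0\<close> in auto)
  also have "\<dots> = 2 * Q\<^sup>2 * (\<bar>\<alpha> - c\<bar> + \<bar>\<beta> - c\<bar>)" by (simp add: power2_eq_square algebra_simps)
  finally have "(a - b) \<bullet> ((\<alpha> - c) *\<^sub>R a - (\<beta> - c) *\<^sub>R b) \<le> 2 * Q\<^sup>2 * (\<bar>\<alpha> - c\<bar> + \<bar>\<beta> - c\<bar>)" .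
  moreover have "(a - b) \<bullet> ((norm a powr p) *\<^sub>R a - (norm b powr p) *\<^sub>R b) \<ge> 0"
    by (rule inner_norm_powr_scaleR_monotone[OF assms(1)])
  ultimately show ?thesis unfolding split
    by (simp add: inner_add_right inner_diff_right power2_norm_eq_inner)
qed

lemma powr_le_add_powr_bounds:
  fixes r lo hi e :: real
  assumes "0 < lo" "lo \<le> r" "r \<le> hi"
  shows "r powr e \<le> lo powr e + hi powr e"
proof (cases "e \<ge> 0")
  case True
  then have "r powr e \<le> hi powr e" using assms by (intro powr_mono2) auto
  then show ?thesis by (simp add: add_increasing)
next
  case False
  then have "r powr e \<le> lo powr e" using assms by (intro powr_mono2') auto
  then show ?thesis by (simp add: add_increasing2)
qed

lemma two_mult_le_weighted_squares:
  fixes a b l :: real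
  assumes "l > 0"
  shows "2 * a * b \<le> l * a\<^sup>2 + b\<^sup>2 / l"
proof -
  have "l * a\<^sup>2 + b\<^sup>2 / l - 2 * a * b = (l * a - b)\<^sup>2 / l"
    using assms by (simp add: field_simps power2_eq_square)
  then show ?thesis using assms by (smt (verit) divide_nonneg_pos zero_le_power2)
qed

section \<open>Temperature consensus and bounded speeds\<close>

locale CSF =
  fixes N :: nat and m :: "nat \<Rightarrow> real" and \<sigma> p \<kappa> :: real and \<phi> :: "real \<Rightarrow> real"
    and x v :: "nat \<Rightarrow> real \<Rightarrow> 'a::euclidean_space" and \<theta> :: "nat \<Rightarrow> real \<Rightarrow> real"
  assumes N_pos: "0 < N"
    and m_pos: "\<And>i. i < N \<Longrightarrow> m i > 0"
    and \<sigma>_pos: "\<sigma> > 0" and p_pos: "p > 0" and \<kappa>_pos: "\<kappa> > 0"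
    and kernel: "comm_kernel \<phi>"
    and kernel_inf_pos: "(INF r\<in>{0..}. \<phi> r) > 0"
    and solution: "CSF_solution N m \<sigma> p \<kappa> \<phi> x v \<theta>"
    and \<theta>_init_pos: "\<And>i. i < N \<Longrightarrow> \<theta> i 0 > 0"
begin

definition "M = (\<Sum>i<N. m i)"

definition "\<theta>bar = (\<Sum>i<N. m i * \<theta> i 0) / M"

definition "\<phi>_inf = (INF r\<in>{0..}. \<phi> r)"

definition "m_min = Min (m ` {..<N})"

definition "weight t i j = m i * m j * \<phi> (norm (x i t - x j t))" for t i j

definition "alignment i t = (\<Sum>j<N. (m j * \<phi> (norm (x i t - x j t))) *\<^sub>R (v j t - v i t))" for i t

definition "friction i t = (\<theta> i t - norm (v i t) powr p) *\<^sub>R v i t" for i t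

definition "accel i t = alignment i t + \<sigma> *\<^sub>R friction i t" for i t

definition "\<theta>_rate i t = \<kappa> * (\<Sum>j<N. m j * \<phi> (norm (x i t - x j t)) * (\<theta> j t - \<theta> i t))" for i t

lemma M_pos: "M > 0"
  unfolding M_def using N_pos m_pos by (intro sum_pos) auto

lemma m_min_pos: "m_min > 0"
  and m_min_le: "i < N \<Longrightarrow> m_min \<le> m i"
proof -
  have "m_min \<in> m ` {..<N}" unfolding m_min_def using N_pos by (intro Min_in) auto
  then show "m_min > 0" using m_pos by auto
  show "i < N \<Longrightarrow> m_min \<le> m i" unfolding m_min_def by (intro Min_le) auto
qed

lemma \<theta>bar_pos: "\<theta>bar > 0"
  unfolding \<theta>bar_def using M_pos N_pos m_pos \<theta>_init_pos by (intro divide_pos_pos sum_pos) auto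

lemma \<phi>_pos: "r \<ge> 0 \<Longrightarrow> \<phi> r > 0"
  and \<phi>_le_\<phi>0: "r \<ge> 0 \<Longrightarrow> \<phi> r \<le> \<phi> 0"
  using kernel unfolding comm_kernel_def by auto

lemma \<phi>_inf_le: "r \<ge> 0 \<Longrightarrow> \<phi>_inf \<le> \<phi> r"
proof -
  have "bdd_below (\<phi> ` {0..})" by (rule bdd_belowI[where m=0]) (auto intro: less_imp_le \<phi>_pos)
  then show "r \<ge> 0 \<Longrightarrow> \<phi>_inf \<le> \<phi> r" unfolding \<phi>_inf_def by (intro cINF_lower) auto
qed

lemma \<phi>_inf_pos: "\<phi>_inf > 0"
  using kernel_inf_pos by (simp add: \<phi>_inf_def)

lemma weight_sym: "weight t i j = weight t j i"
  unfolding weight_def by (simp add: norm_minus_commute algebra_simps)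

lemma weight_ge: "i < N \<Longrightarrow> j < N \<Longrightarrow> weight t i j \<ge> \<phi>_inf * (m i * m j)"
  unfolding weight_def using \<phi>_inf_le[of "norm (x i t - x j t)"] m_pos[of i] m_pos[of j]
  by (simp add: mult_right_mono algebra_simps)

lemma v_deriv: "i < N \<Longrightarrow> t \<ge> 0 \<Longrightarrow> (v i has_vector_derivative accel i t) (at t within {0..})"
  using solution unfolding CSF_solution_def accel_def alignment_def friction_def by simp

lemma \<theta>_deriv: "i < N \<Longrightarrow> t \<ge> 0 \<Longrightarrow> (\<theta> i has_real_derivative \<theta>_rate i t) (at t within {0..})"
  using solution unfolding CSF_solution_def \<theta>_rate_def by blast

lemma weighted_\<theta>_rate_sum: "(\<Sum>i<N. m i * \<theta>_rate i t) = 0"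
proof -
  have "(\<Sum>i<N. m i * \<theta>_rate i t) = \<kappa> * (\<Sum>i<N. \<Sum>j<N. weight t i j * ((\<theta> j t - \<theta> i t) \<bullet> 1))"
    unfolding \<theta>_rate_def weight_def by (simp add: sum_distrib_left algebra_simps)
  also have "\<dots> = 0"
    using double_sum_antisym_inner[of N "weight t" "\<lambda>j. \<theta> j t" "\<lambda>_. 1"] weight_sym by simp
  finally show ?thesis .
qed

lemma \<theta>_mass_conserved: "t \<ge> 0 \<Longrightarrow> (\<Sum>i<N. m i * \<theta> i t) = M * \<theta>bar"
proof -
  have "((\<lambda>t. \<Sum>i<N. m i * \<theta> i t) has_real_derivative 0) (at s within {0..})" if "s \<ge> 0" for s
  proof -
    have "((\<lambda>t. \<Sum>i<N. m i * \<theta> i t) has_real_derivative (\<Sum>i<N. m i * \<theta>_rate i s)) (at s within {0..})"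
      by (intro DERIV_sum DERIV_cmult \<theta>_deriv that) simp
    then show ?thesis by (simp add: weighted_\<theta>_rate_sum)
  qed
  then have "\<exists>c. \<forall>t\<in>{0..}. (\<Sum>i<N. m i * \<theta> i t) = c"
    by (intro has_field_derivative_zero_constant) auto
  then show "t \<ge> 0 \<Longrightarrow> (\<Sum>i<N. m i * \<theta> i t) = M * \<theta>bar"
    using M_pos by (auto simp: \<theta>bar_def)
qed

definition "\<theta>_variance t = (\<Sum>i<N. m i * (\<theta> i t - \<theta>bar)\<^sup>2)" for t

lemma \<theta>_variance_deriv:
  "t \<ge> 0 \<Longrightarrow> (\<theta>_variance has_real_derivative (\<Sum>i<N. m i * (2 * (\<theta> i t - \<theta>bar) * \<theta>_rate i t)))
     (at t within {0..})"
  unfolding \<theta>_variance_def by (rule derivative_eq_intros \<theta>_deriv refl | simp add: algebra_simps)+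

lemma \<theta>_variance_dissipation:
  assumes "t \<ge> 0"
  shows "(\<Sum>i<N. m i * (2 * (\<theta> i t - \<theta>bar) * \<theta>_rate i t)) \<le> - (2 * \<kappa> * \<phi>_inf * M) * \<theta>_variance t"
proof -
  have "(\<Sum>i<N. m i * (2 * (\<theta> i t - \<theta>bar) * \<theta>_rate i t)) =
        2 * \<kappa> * (\<Sum>i<N. \<Sum>j<N. weight t i j * ((\<theta> j t - \<theta> i t) \<bullet> (\<theta> i t - \<theta>bar)))"
    unfolding \<theta>_rate_def weight_def by (simp add: sum_distrib_left algebra_simps)
  also have "\<dots> = - \<kappa> * (\<Sum>i<N. \<Sum>j<N. weight t i j * (\<theta> j t - \<theta> i t)\<^sup>2)"
    using double_sum_antisym_inner[of N "weight t" "\<lambda>j. \<theta> j t" "\<lambda>i. \<theta> i t - \<theta>bar"] weight_sym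
    by (simp add: power2_eq_square)
  also have "\<dots> \<le> - \<kappa> * (\<Sum>i<N. \<Sum>j<N. \<phi>_inf * (m i * m j) * (\<theta> j t - \<theta> i t)\<^sup>2)"
    using \<kappa>_pos weight_ge by (auto intro!: sum_mono mult_right_mono)
  also have "(\<Sum>i<N. \<Sum>j<N. \<phi>_inf * (m i * m j) * (\<theta> j t - \<theta> i t)\<^sup>2)
       = \<phi>_inf * (\<Sum>i<N. \<Sum>j<N. m i * m j * ((\<theta> j t - \<theta>bar) - (\<theta> i t - \<theta>bar))\<^sup>2)"
    by (simp add: sum_distrib_left algebra_simps)
  also have "(\<Sum>i<N. \<Sum>j<N. m i * m j * ((\<theta> j t - \<theta>bar) - (\<theta> i t - \<theta>bar))\<^sup>2)
      = 2 * M * \<theta>_variance t - 2 * (\<Sum>i<N. m i * (\<theta> i t - \<theta>bar))\<^sup>2"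
    unfolding double_sum_weighted_square_diff M_def \<theta>_variance_def ..
  also have "(\<Sum>i<N. m i * (\<theta> i t - \<theta>bar)) = 0"
    using \<theta>_mass_conserved[OF assms]
    by (simp add: right_diff_distrib sum_subtractf sum_distrib_right[symmetric] M_def)
  finally show ?thesis by (simp add: algebra_simps)
qed

lemma \<theta>_variance_nonneg: "\<theta>_variance t \<ge> 0"
  unfolding \<theta>_variance_def using m_pos by (intro sum_nonneg) (simp add: less_imp_le)

lemma \<theta>_deviation_le_variance: "i < N \<Longrightarrow> m_min * (\<theta> i t - \<theta>bar)\<^sup>2 \<le> \<theta>_variance t"
proof -
  assume "i < N"
  then have "m_min * (\<theta> i t - \<theta>bar)\<^sup>2 \<le> m i * (\<theta> i t - \<theta>bar)\<^sup>2"
    by (intro mult_right_mono m_min_le) auto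
  also have "\<dots> \<le> \<theta>_variance t"
    unfolding \<theta>_variance_def using \<open>i < N\<close> m_pos
    by (intro member_le_sum) (auto intro!: mult_nonneg_nonneg intro: less_imp_le)
  finally show ?thesis .
qed

lemma \<theta>_variance_nonincreasing:
  assumes "t \<ge> 0"
  shows "\<theta>_variance t \<le> \<theta>_variance 0"
proof -
  let ?D = "\<lambda>s. \<Sum>i<N. m i * (2 * (\<theta> i s - \<theta>bar) * \<theta>_rate i s)"
  have "- \<theta>_variance 0 \<le> - \<theta>_variance t"
  proof (rule DERIV_nonneg_imp_nondecreasing_atLeast[where a=0 and f="\<lambda>s. - \<theta>_variance s"])
    show "((\<lambda>s. - \<theta>_variance s) has_real_derivative - ?D s) (at s within {0..})" if "s \<ge> 0" for s
      using \<theta>_variance_deriv[OF that] by (rule DERIV_minus)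
    show "- ?D s \<ge> 0" if "s \<ge> 0" for s
    proof -
      have "0 \<le> 2 * \<kappa> * \<phi>_inf * M * \<theta>_variance s"
        using \<kappa>_pos \<phi>_inf_pos M_pos \<theta>_variance_nonneg by simp
      then show ?thesis using \<theta>_variance_dissipation[OF that] by simp
    qed
  qed (use assms in auto)
  then show ?thesis by simp
qed

lemma \<theta>_bounded: "\<exists>\<Theta>. \<forall>i<N. \<forall>t\<ge>0. \<bar>\<theta> i t\<bar> \<le> \<Theta>"
proof -
  have "\<bar>\<theta> i t\<bar> \<le> \<theta>bar + sqrt (\<theta>_variance 0 / m_min)" if "i < N" "t \<ge> 0" for i t
  proof -
    have "(\<theta> i t - \<theta>bar)\<^sup>2 \<le> \<theta>_variance 0 / m_min"
      using \<theta>_deviation_le_variance[OF that(1), of t] \<theta>_variance_nonincreasing[OF that(2)] m_min_pos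
      by (simp add: field_simps)
    then have "\<bar>\<theta> i t - \<theta>bar\<bar> \<le> sqrt (\<theta>_variance 0 / m_min)" by (simp add: real_le_rsqrt)
    then show ?thesis using \<theta>bar_pos by linarith
  qed
  then show ?thesis by blast
qed

lemma \<theta>_consensus: "i < N \<Longrightarrow> exp_decay (\<lambda>t. \<bar>\<theta> i t - \<theta>bar\<bar>)"
proof -
  assume "i < N"
  have "exp_decay \<theta>_variance"
  proof (rule exp_decay_of_differential_inequality[OF \<theta>_variance_deriv])
    show "(\<Sum>i<N. m i * (2 * (\<theta> i t - \<theta>bar) * \<theta>_rate i t))
        \<le> - (2 * \<kappa> * \<phi>_inf * M) * \<theta>_variance t + 0" if "t \<ge> 0" for t
      using \<theta>_variance_dissipation[OF that] by simp
  qed (use \<kappa>_pos \<phi>_inf_pos M_pos exp_decay_zero in auto)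
  then have "exp_decay (\<lambda>t. 1 / m_min * \<theta>_variance t)"
    using m_min_pos by (intro exp_decay_cmult) auto
  moreover have "(\<theta> i t - \<theta>bar)\<^sup>2 \<le> 1 / m_min * \<theta>_variance t" for t
    using \<theta>_deviation_le_variance[OF \<open>i < N\<close>] m_min_pos by (simp add: field_simps)
  ultimately have "exp_decay (\<lambda>t. (\<theta> i t - \<theta>bar)\<^sup>2)"
    by (auto intro: exp_decay_mono)
  then show ?thesis by (rule exp_decay_abs_of_square)
qed

lemma v_inner_accel:
  "v i t \<bullet> accel i t = (\<Sum>j<N. (m j * \<phi> (norm (x i t - x j t))) * (v i t \<bullet> v j t - v i t \<bullet> v i t))
    + \<sigma> * (\<theta> i t - norm (v i t) powr p) * (v i t \<bullet> v i t)"
  unfolding accel_def alignment_def friction_def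
  by (simp add: inner_add_right inner_sum_right inner_diff_right)

lemma accel_inward_at_max_speed:
  assumes "i < N" "v i t \<noteq> 0" "\<theta> i t < norm (v i t) powr p"
    and fastest: "\<And>j. j < N \<Longrightarrow> norm (v j t) \<le> norm (v i t)"
  shows "v i t \<bullet> accel i t < 0"
proof -
  have "(\<Sum>j<N. (m j * \<phi> (norm (x i t - x j t))) * (v i t \<bullet> v j t - v i t \<bullet> v i t)) \<le> 0"
  proof (intro sum_nonpos mult_nonneg_nonpos)
    fix j assume "j \<in> {..<N}"
    then show "m j * \<phi> (norm (x i t - x j t)) \<ge> 0" using m_pos \<phi>_pos by (simp add: less_imp_le)
    have "v i t \<bullet> v j t \<le> norm (v i t) * norm (v j t)" by (rule norm_cauchy_schwarz)
    also have "\<dots> \<le> norm (v i t) * norm (v i t)" using fastest \<open>j \<in> {..<N}\<close> by (simp add: mult_left_mono)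
    finally show "v i t \<bullet> v j t - v i t \<bullet> v i t \<le> 0" by (simp add: dot_square_norm power2_eq_square)
  qed
  moreover have "\<sigma> * (\<theta> i t - norm (v i t) powr p) * (v i t \<bullet> v i t) < 0"
    using assms(2,3) \<sigma>_pos by (intro mult_neg_pos mult_pos_neg) auto
  ultimately show ?thesis by (simp add: v_inner_accel)
qed

lemma speed_bounded: "\<exists>Q>0. \<forall>i<N. \<forall>t\<ge>0. norm (v i t) \<le> Q"
proof -
  obtain \<Theta> where \<Theta>: "\<And>i t. i < N \<Longrightarrow> t \<ge> 0 \<Longrightarrow> \<bar>\<theta> i t\<bar> \<le> \<Theta>" using \<theta>_bounded by blast
  define Q where "Q = (\<Sum>i<N. norm (v i 0)) + \<bar>\<Theta>\<bar> powr (1 / p) + 1"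
  have "(\<Sum>i<N. norm (v i 0)) \<ge> 0" by (simp add: sum_nonneg)
  then have "Q > 0" using powr_ge_zero[of "\<bar>\<Theta>\<bar>" "1 / p"] unfolding Q_def by linarith
  have "Q powr p > \<Theta>"
  proof -
    have "\<bar>\<Theta>\<bar> powr (1 / p) < Q" using \<open>(\<Sum>i<N. norm (v i 0)) \<ge> 0\<close> by (simp add: Q_def)
    then have "(\<bar>\<Theta>\<bar> powr (1 / p)) powr p < Q powr p" using p_pos by (intro powr_less_mono2) auto
    then show ?thesis using p_pos by (simp add: powr_powr)
  qed
  have init: "norm (v i 0) < Q" if "i < N" for i
  proof -
    have "norm (v i 0) \<le> (\<Sum>i<N. norm (v i 0))" using that by (intro member_le_sum) auto
    then show ?thesis using powr_ge_zero[of "\<bar>\<Theta>\<bar>" "1 / p"] unfolding Q_def by linarith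
  qed
  have le_Q_iff: "norm y \<le> Q \<longleftrightarrow> Q\<^sup>2 - y \<bullet> y \<ge> 0" for y :: 'a
    using \<open>Q > 0\<close> by (simp add: power2_norm_eq_inner[symmetric] abs_le_square_iff)
  define g where "g i t = Q\<^sup>2 - v i t \<bullet> v i t" for i t
  have "g i t > 0" if "i < N" "t \<ge> 0" for i t
  proof (rule positivity_barrier[where g=g and N=N and a=0
        and g'="\<lambda>i t. - (v i t \<bullet> accel i t + accel i t \<bullet> v i t)"])
    show "(g i has_real_derivative - (v i t \<bullet> accel i t + accel i t \<bullet> v i t)) (at t within {0..})"
      if "i < N" "t \<ge> 0" for i t
      unfolding g_def using DERIV_diff[OF DERIV_const has_real_derivative_inner[OF v_deriv v_deriv]] that
      by simp
    show "g i 0 > 0" if "i < N" for i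
      using init[OF that] \<open>Q > 0\<close>
      by (simp add: g_def power2_norm_eq_inner[symmetric] power_strict_mono)
    fix i t assume "i < N" "t > 0" "g i t = 0" and nonneg: "\<And>j s. j < N \<Longrightarrow> 0 \<le> s \<Longrightarrow> s \<le> t \<Longrightarrow> g j s \<ge> 0"
    have "(norm (v i t))\<^sup>2 = Q\<^sup>2" using \<open>g i t = 0\<close> by (simp add: g_def power2_norm_eq_inner)
    then have "norm (v i t) = Q" using \<open>Q > 0\<close> by (simp add: power2_eq_iff_nonneg)
    moreover have "norm (v j t) \<le> Q" if "j < N" for j
      using nonneg[OF that _ order.refl] \<open>t > 0\<close> le_Q_iff by (simp add: g_def)
    moreover have "\<theta> i t < Q powr p"
      using \<Theta>[OF \<open>i < N\<close>] \<open>t > 0\<close> \<open>Q powr p > \<Theta>\<close> by (smt (verit))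
    ultimately have "v i t \<bullet> accel i t < 0"
      using \<open>i < N\<close> \<open>Q > 0\<close> by (intro accel_inward_at_max_speed) auto
    then show "- (v i t \<bullet> accel i t + accel i t \<bullet> v i t) > 0" by (simp add: inner_commute)
  qed (use that in auto)
  then show ?thesis using \<open>Q > 0\<close> le_Q_iff by (auto simp: g_def less_imp_le)
qed

definition "spread t = (\<Sum>i<N. \<Sum>j<N. m i * m j * ((v i t - v j t) \<bullet> (v i t - v j t)))" for t

lemma spread_deriv:
  assumes "t \<ge> 0"
  shows "(spread has_real_derivative
     2 * (\<Sum>i<N. \<Sum>j<N. m i * m j * ((v i t - v j t) \<bullet> (alignment i t - alignment j t)))
   + 2 * \<sigma> * (\<Sum>i<N. \<Sum>j<N. m i * m j * ((v i t - v j t) \<bullet> (friction i t - friction j t)))) (at t within {0..})"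
proof -
  have "(spread has_real_derivative (\<Sum>i<N. \<Sum>j<N. m i * m j *
      ((v i t - v j t) \<bullet> (accel i t - accel j t) + (accel i t - accel j t) \<bullet> (v i t - v j t))))
      (at t within {0..})"
    unfolding spread_def
    by (rule derivative_eq_intros has_real_derivative_inner v_deriv assms refl | simp add: ac_simps)+
  moreover have pair: "(v i t - v j t) \<bullet> (accel i t - accel j t) + (accel i t - accel j t) \<bullet> (v i t - v j t)
      = 2 * ((v i t - v j t) \<bullet> (alignment i t - alignment j t))
        + 2 * \<sigma> * ((v i t - v j t) \<bullet> (friction i t - friction j t))" for i j
    by (simp add: accel_def inner_diff_left inner_diff_right inner_add_left inner_add_right inner_commute
        algebra_simps)
  moreover have "(\<Sum>i<N. \<Sum>j<N. m i * m j * (2 * A i j + 2 * \<sigma> * B i j))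
      = 2 * (\<Sum>i<N. \<Sum>j<N. m i * m j * A i j) + 2 * \<sigma> * (\<Sum>i<N. \<Sum>j<N. m i * m j * B i j)" for A B
    by (simp add: sum.distrib sum_distrib_left algebra_simps)
  ultimately show ?thesis by (simp only: pair)
qed

lemma alignment_dissipation_eq:
  "(\<Sum>i<N. \<Sum>j<N. m i * m j * ((v i t - v j t) \<bullet> (alignment i t - alignment j t)))
    = - M * (\<Sum>i<N. \<Sum>k<N. weight t i k * ((v i t - v k t) \<bullet> (v i t - v k t)))"
proof -
  define S where "S = (\<Sum>j<N. m j *\<^sub>R v j t)"
  have "(\<Sum>i<N. \<Sum>j<N. m i * m j * ((v i t - v j t) \<bullet> (alignment i t - alignment j t)))
      = (\<Sum>i<N. \<Sum>j<N. m i * m j * ((v j t - v i t) \<bullet> (alignment j t - alignment i t)))"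
    by (intro sum.cong refl) (simp add: inner_diff_left inner_diff_right algebra_simps)
  also have "\<dots> = -2 * (\<Sum>i<N. \<Sum>j<N. m i * m j * ((v j t - v i t) \<bullet> alignment i t))"
    using double_sum_antisym_inner[of N "\<lambda>i j. m i * m j" "\<lambda>i. v i t" "\<lambda>i. alignment i t"] by simp
  also have "(\<Sum>i<N. \<Sum>j<N. m i * m j * ((v j t - v i t) \<bullet> alignment i t))
      = (\<Sum>i<N. m i * ((S - M *\<^sub>R v i t) \<bullet> alignment i t))"
    by (simp add: S_def M_def inner_sum_left sum_distrib_left scaleR_sum_left sum_subtractf
        inner_diff_left algebra_simps)
  also have "\<dots> = (\<Sum>i<N. \<Sum>k<N. weight t i k * ((v k t - v i t) \<bullet> (S - M *\<^sub>R v i t)))"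
    unfolding alignment_def weight_def
    by (simp add: inner_sum_right sum_distrib_left inner_commute algebra_simps)
  also have "\<dots> = - (1/2) * (\<Sum>i<N. \<Sum>k<N. weight t i k *
      ((v k t - v i t) \<bullet> ((S - M *\<^sub>R v k t) - (S - M *\<^sub>R v i t))))"
    using double_sum_antisym_inner[of N "weight t" "\<lambda>i. v i t" "\<lambda>i. S - M *\<^sub>R v i t"] weight_sym
    by simp
  also have "\<dots> = (M / 2) * (\<Sum>i<N. \<Sum>k<N. weight t i k * ((v i t - v k t) \<bullet> (v i t - v k t)))"
    by (simp add: sum_distrib_left inner_diff_left inner_diff_right inner_commute algebra_simps)
  finally show ?thesis by simp
qed

lemma alignment_dissipation:
  "(\<Sum>i<N. \<Sum>j<N. m i * m j * ((v i t - v j t) \<bullet> (alignment i t - alignment j t)))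
    \<le> - (M * \<phi>_inf) * spread t"
proof -
  have "\<phi>_inf * spread t = (\<Sum>i<N. \<Sum>k<N. \<phi>_inf * (m i * m k) * ((v i t - v k t) \<bullet> (v i t - v k t)))"
    unfolding spread_def by (simp add: sum_distrib_left algebra_simps)
  also have "\<dots> \<le> (\<Sum>i<N. \<Sum>k<N. weight t i k * ((v i t - v k t) \<bullet> (v i t - v k t)))"
    using weight_ge by (intro sum_mono mult_right_mono) auto
  finally have "M * (\<phi>_inf * spread t)
      \<le> M * (\<Sum>i<N. \<Sum>k<N. weight t i k * ((v i t - v k t) \<bullet> (v i t - v k t)))"
    by (rule mult_left_mono) (use M_pos in simp)
  then show ?thesis unfolding alignment_dissipation_eq by simp
qed

lemma friction_spread_bound:
  assumes Q: "\<And>i. i < N \<Longrightarrow> norm (v i t) \<le> Q"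
  shows "(\<Sum>i<N. \<Sum>j<N. m i * m j * ((v i t - v j t) \<bullet> (friction i t - friction j t)))
     \<le> \<theta>bar * spread t + 4 * Q\<^sup>2 * M\<^sup>2 * (\<Sum>k<N. \<bar>\<theta> k t - \<theta>bar\<bar>)"
proof -
  define S where "S = (\<Sum>k<N. \<bar>\<theta> k t - \<theta>bar\<bar>)"
  have pair: "(v i t - v j t) \<bullet> (friction i t - friction j t)
      \<le> \<theta>bar * ((v i t - v j t) \<bullet> (v i t - v j t)) + 4 * Q\<^sup>2 * S" if "i < N" "j < N" for i j
  proof -
    have "\<bar>\<theta> i t - \<theta>bar\<bar> \<le> S" "\<bar>\<theta> j t - \<theta>bar\<bar> \<le> S"
      using that unfolding S_def by (auto intro: member_le_sum)
    then have "\<bar>\<theta> i t - \<theta>bar\<bar> + \<bar>\<theta> j t - \<theta>bar\<bar> \<le> 2 * S" by simp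
    then have "2 * Q\<^sup>2 * (\<bar>\<theta> i t - \<theta>bar\<bar> + \<bar>\<theta> j t - \<theta>bar\<bar>) \<le> 2 * Q\<^sup>2 * (2 * S)"
      by (rule mult_left_mono) simp
    also have "\<dots> = 4 * Q\<^sup>2 * S" by simp
    finally have "2 * Q\<^sup>2 * (\<bar>\<theta> i t - \<theta>bar\<bar> + \<bar>\<theta> j t - \<theta>bar\<bar>) \<le> 4 * Q\<^sup>2 * S" .
    moreover have "(v i t - v j t) \<bullet> (friction i t - friction j t)
        \<le> \<theta>bar * (norm (v i t - v j t))\<^sup>2 + 2 * Q\<^sup>2 * (\<bar>\<theta> i t - \<theta>bar\<bar> + \<bar>\<theta> j t - \<theta>bar\<bar>)"
      unfolding friction_def using Q that p_pos by (intro inner_friction_difference_le) auto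
    ultimately show ?thesis unfolding power2_norm_eq_inner by linarith
  qed
  have "m i * m j * ((v i t - v j t) \<bullet> (friction i t - friction j t))
      \<le> \<theta>bar * (m i * m j * ((v i t - v j t) \<bullet> (v i t - v j t))) + m i * m j * (4 * Q\<^sup>2 * S)"
    if "i < N" "j < N" for i j
  proof -
    have "m i * m j * ((v i t - v j t) \<bullet> (friction i t - friction j t))
        \<le> m i * m j * (\<theta>bar * ((v i t - v j t) \<bullet> (v i t - v j t)) + 4 * Q\<^sup>2 * S)"
      using pair[OF that] that m_pos by (intro mult_left_mono) (auto intro: less_imp_le)
    then show ?thesis by (simp add: ring_distribs mult_ac)
  qed
  then have "(\<Sum>i<N. \<Sum>j<N. m i * m j * ((v i t - v j t) \<bullet> (friction i t - friction j t)))
      \<le> (\<Sum>i<N. \<Sum>j<N. \<theta>bar * (m i * m j * ((v i t - v j t) \<bullet> (v i t - v j t)))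
                       + m i * m j * (4 * Q\<^sup>2 * S))"
    by (intro sum_mono) auto
  also have "\<dots> = \<theta>bar * spread t + (\<Sum>i<N. \<Sum>j<N. m i * m j) * (4 * Q\<^sup>2 * S)"
    unfolding spread_def by (simp add: sum.distrib sum_distrib_left sum_distrib_right)
  also have "(\<Sum>i<N. \<Sum>j<N. m i * m j) = M\<^sup>2"
    unfolding M_def by (simp add: sum_product[symmetric] power2_eq_square)
  finally show ?thesis by (simp add: S_def algebra_simps)
qed

end

section \<open>Velocity alignment\<close>

locale CSF_subcritical = CSF +
  assumes subcritical: "(INF r\<in>{0..}. \<phi> r) * (\<Sum>i<N. m i) > \<sigma> * ((\<Sum>i<N. m i * \<theta> i 0) / (\<Sum>i<N. m i))"
begin

lemma alignment_dominates_friction: "\<phi>_inf * M > \<sigma> * \<theta>bar"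
  using subcritical by (simp add: \<phi>_inf_def M_def \<theta>bar_def)

lemma spread_exp_decay: "exp_decay spread"
proof -
  obtain Q where "Q > 0" and Q: "\<And>i t. i < N \<Longrightarrow> t \<ge> 0 \<Longrightarrow> norm (v i t) \<le> Q"
    using speed_bounded by blast
  let ?S = "\<lambda>t. \<Sum>k<N. \<bar>\<theta> k t - \<theta>bar\<bar>"
  let ?K = "8 * \<sigma> * Q\<^sup>2 * M\<^sup>2"
  have "exp_decay ?S" by (rule exp_decay_sum) (auto intro: \<theta>_consensus)
  then have "exp_decay (\<lambda>t. ?K * ?S t)" using \<sigma>_pos by (intro exp_decay_cmult) auto
  moreover have "2 * (\<Sum>i<N. \<Sum>j<N. m i * m j * ((v i t - v j t) \<bullet> (alignment i t - alignment j t)))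
      + 2 * \<sigma> * (\<Sum>i<N. \<Sum>j<N. m i * m j * ((v i t - v j t) \<bullet> (friction i t - friction j t)))
      \<le> - (2 * (\<phi>_inf * M - \<sigma> * \<theta>bar)) * spread t + ?K * ?S t" if "t \<ge> 0" for t
  proof -
    have "\<sigma> * (\<Sum>i<N. \<Sum>j<N. m i * m j * ((v i t - v j t) \<bullet> (friction i t - friction j t)))
        \<le> \<sigma> * (\<theta>bar * spread t + 4 * Q\<^sup>2 * M\<^sup>2 * ?S t)"
      using friction_spread_bound[OF Q[OF _ that]] \<sigma>_pos by (intro mult_left_mono) auto
    then show ?thesis using alignment_dissipation[of t] by (simp add: algebra_simps)
  qed
  ultimately show ?thesis
    using alignment_dominates_friction
    by (intro exp_decay_of_differential_inequality[OF spread_deriv, where \<alpha>="2 * (\<phi>_inf * M - \<sigma> * \<theta>bar)"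
          and g="\<lambda>t. ?K * ?S t"]) auto
qed

lemma velocity_alignment:
  assumes "i < N" "j < N"
  shows "exp_decay (\<lambda>t. norm (v i t - v j t))"
proof -
  have "(norm (v i t - v j t))\<^sup>2 \<le> 1 / m_min\<^sup>2 * spread t" for t
  proof -
    have "m_min * m_min \<le> m i * m j"
      by (rule mult_mono) (use m_min_le m_pos assms m_min_pos in \<open>auto intro: less_imp_le\<close>)
    then have "m_min\<^sup>2 * (norm (v i t - v j t))\<^sup>2 \<le> m i * m j * (norm (v i t - v j t))\<^sup>2"
      by (intro mult_right_mono) (simp_all add: power2_eq_square)
    also have "\<dots> = m i * m j * ((v i t - v j t) \<bullet> (v i t - v j t))"
      by (simp add: power2_norm_eq_inner)
    also have "\<dots> \<le> (\<Sum>j'<N. m i * m j' * ((v i t - v j' t) \<bullet> (v i t - v j' t)))"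
      using assms m_pos by (intro member_le_sum) (auto intro!: mult_nonneg_nonneg intro: less_imp_le)
    also have "\<dots> \<le> spread t" unfolding spread_def
      using assms m_pos
      by (intro member_le_sum[where f="\<lambda>i. \<Sum>j<N. m i * m j * ((v i t - v j t) \<bullet> (v i t - v j t))"]
          sum_nonneg) (auto intro!: mult_nonneg_nonneg intro: less_imp_le)
    finally show ?thesis using m_min_pos by (simp add: field_simps)
  qed
  moreover have "exp_decay (\<lambda>t. 1 / m_min\<^sup>2 * spread t)"
    by (intro exp_decay_cmult spread_exp_decay) simp
  ultimately have "exp_decay (\<lambda>t. (norm (v i t - v j t))\<^sup>2)" by (auto intro: exp_decay_mono)
  then show ?thesis using exp_decay_abs_of_square by fastforce
qed

end

section \<open>Invariance of the sector\<close>

locale CSF_sectorial = CSF +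
  fixes e :: 'a
  assumes e_unit: "norm e = 1"
    and sector_init: "\<And>i. i < N \<Longrightarrow> e \<bullet> v i 0 > 0"
begin

lemma e_inner_accel:
  "e \<bullet> accel i t = (\<Sum>j<N. (m j * \<phi> (norm (x i t - x j t))) * (e \<bullet> v j t - e \<bullet> v i t))
    + \<sigma> * (\<theta> i t - norm (v i t) powr p) * (e \<bullet> v i t)"
  unfolding accel_def alignment_def friction_def
  by (simp add: inner_add_right inner_sum_right inner_diff_right)

lemma e_inner_v_deriv:
  "i < N \<Longrightarrow> t \<ge> 0 \<Longrightarrow> ((\<lambda>t. e \<bullet> v i t) has_real_derivative e \<bullet> accel i t) (at t within {0..})"
  using has_real_derivative_inner[OF has_vector_derivative_const v_deriv] by simp

lemma e_inner_accel_lower: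
  assumes "i < N" and sector: "\<And>j. j < N \<Longrightarrow> e \<bullet> v j t > 0"
    and "\<bar>\<theta> i t\<bar> \<le> \<Theta>" "norm (v i t) \<le> Q"
  shows "e \<bullet> accel i t \<ge> - (M * \<phi> 0 + \<sigma> * (\<Theta> + Q powr p)) * (e \<bullet> v i t)"
proof -
  have "(\<Sum>j<N. - (m j * \<phi> 0) * (e \<bullet> v i t))
      \<le> (\<Sum>j<N. (m j * \<phi> (norm (x i t - x j t))) * (e \<bullet> v j t - e \<bullet> v i t))"
  proof (rule sum_mono)
    fix j assume "j \<in> {..<N}"
    then have "0 \<le> m j * \<phi> (norm (x i t - x j t))" "m j * \<phi> (norm (x i t - x j t)) \<le> m j * \<phi> 0"
      using m_pos \<phi>_pos \<phi>_le_\<phi>0 by (auto intro: mult_left_mono less_imp_le)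
    then have "(m j * \<phi> 0) * (- (e \<bullet> v i t)) \<le> (m j * \<phi> (norm (x i t - x j t))) * (- (e \<bullet> v i t))"
      using sector[OF \<open>i < N\<close>] by (intro mult_right_mono_neg) auto
    also have "\<dots> \<le> (m j * \<phi> (norm (x i t - x j t))) * (e \<bullet> v j t - e \<bullet> v i t)"
      using sector[of j] \<open>j \<in> {..<N}\<close> \<open>0 \<le> m j * \<phi> (norm (x i t - x j t))\<close>
      by (intro mult_left_mono) auto
    finally show "- (m j * \<phi> 0) * (e \<bullet> v i t) \<le> (m j * \<phi> (norm (x i t - x j t))) * (e \<bullet> v j t - e \<bullet> v i t)"
      by simp
  qed
  moreover have "(\<Sum>j<N. - (m j * \<phi> 0) * (e \<bullet> v i t)) = - (M * \<phi> 0) * (e \<bullet> v i t)"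
    by (simp add: M_def sum_distrib_right sum_negf)
  moreover have "- (\<sigma> * (\<Theta> + Q powr p)) * (e \<bullet> v i t) \<le> \<sigma> * (\<theta> i t - norm (v i t) powr p) * (e \<bullet> v i t)"
  proof -
    have "norm (v i t) powr p \<le> Q powr p" using assms(4) p_pos by (intro powr_mono2) auto
    then have "- (\<Theta> + Q powr p) \<le> \<theta> i t - norm (v i t) powr p" using assms(3) by linarith
    then have "\<sigma> * (- (\<Theta> + Q powr p)) \<le> \<sigma> * (\<theta> i t - norm (v i t) powr p)"
      by (rule mult_left_mono) (use \<sigma>_pos in simp)
    then have "- (\<sigma> * (\<Theta> + Q powr p)) \<le> \<sigma> * (\<theta> i t - norm (v i t) powr p)"
      by (simp only: mult_minus_right)
    then show ?thesis
      using sector[OF \<open>i < N\<close>] by (intro mult_right_mono) auto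
  qed
  ultimately show ?thesis unfolding e_inner_accel by (simp add: algebra_simps)
qed

lemma sector_preserved:
  assumes "i < N" "t \<ge> 0"
  shows "e \<bullet> v i t > 0"
proof -
  obtain \<Theta> where \<Theta>: "\<And>i t. i < N \<Longrightarrow> t \<ge> 0 \<Longrightarrow> \<bar>\<theta> i t\<bar> \<le> \<Theta>" using \<theta>_bounded by blast
  obtain Q where Q: "\<And>i t. i < N \<Longrightarrow> t \<ge> 0 \<Longrightarrow> norm (v i t) \<le> Q" using speed_bounded by blast
  define L where "L = M * \<phi> 0 + \<sigma> * (\<Theta> + Q powr p) + 1"
  define g where "g i t = exp (L * t) * (e \<bullet> v i t) - (e \<bullet> v i 0) / 2" for i t
  have "g i t > 0"
  proof (rule positivity_barrier[where g=g and N=N and a=0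
        and g'="\<lambda>i t. L * exp (L * t) * (e \<bullet> v i t) + exp (L * t) * (e \<bullet> accel i t)"])
    show "(g i has_real_derivative L * exp (L * t) * (e \<bullet> v i t) + exp (L * t) * (e \<bullet> accel i t))
        (at t within {0..})" if "i < N" "t \<ge> 0" for i t
      unfolding g_def by (rule derivative_eq_intros e_inner_v_deriv that refl | simp)+
    show "g i 0 > 0" if "i < N" for i
      using sector_init[OF that] by (simp add: g_def)
    fix i t assume "i < N" "t > 0" "g i t = 0"
      and nonneg: "\<And>j s. j < N \<Longrightarrow> 0 \<le> s \<Longrightarrow> s \<le> t \<Longrightarrow> g j s \<ge> 0"
    have sector: "e \<bullet> v j t > 0" if "j < N" for j
    proof -
      have "exp (L * t) * (e \<bullet> v j t) > 0"
        using nonneg[OF that, of t] \<open>t > 0\<close> sector_init[OF that] by (simp add: g_def)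
      then show ?thesis by (simp add: zero_less_mult_iff)
    qed
    have "e \<bullet> v i t \<le> L * (e \<bullet> v i t) + e \<bullet> accel i t"
      using e_inner_accel_lower[OF \<open>i < N\<close> sector \<Theta> Q] \<open>i < N\<close> \<open>t > 0\<close>
      by (simp add: L_def algebra_simps)
    then have "0 < exp (L * t) * (L * (e \<bullet> v i t) + e \<bullet> accel i t)"
      using sector[OF \<open>i < N\<close>] by simp
    then show "L * exp (L * t) * (e \<bullet> v i t) + exp (L * t) * (e \<bullet> accel i t) > 0"
      by (simp add: algebra_simps)
  qed (use assms in auto)
  then have "exp (L * t) * (e \<bullet> v i t) > 0" using sector_init[OF \<open>i < N\<close>] by (simp add: g_def)
  then show ?thesis by (simp add: zero_less_mult_iff)
qed

end

section \<open>Nondegenerate flocking\<close>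

locale CSF_flocking = CSF_subcritical + CSF_sectorial
begin

definition "momentum t = (\<Sum>i<N. m i * (e \<bullet> v i t))" for t

lemma momentum_deriv:
  assumes "t \<ge> 0"
  shows "(momentum has_real_derivative
           \<sigma> * (\<Sum>i<N. m i * ((\<theta> i t - norm (v i t) powr p) * (e \<bullet> v i t)))) (at t within {0..})"
proof -
  have "(momentum has_real_derivative (\<Sum>i<N. m i * (e \<bullet> accel i t))) (at t within {0..})"
    unfolding momentum_def by (intro DERIV_sum DERIV_cmult e_inner_v_deriv assms) simp
  moreover have "m i * (e \<bullet> accel i t) = (\<Sum>j<N. weight t i j * ((v j t - v i t) \<bullet> e))
      + \<sigma> * (m i * ((\<theta> i t - norm (v i t) powr p) * (e \<bullet> v i t)))" for i
    unfolding e_inner_accel weight_def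
    by (simp add: sum_distrib_left inner_diff_left inner_commute algebra_simps)
  then have "(\<Sum>i<N. m i * (e \<bullet> accel i t)) = (\<Sum>i<N. \<Sum>j<N. weight t i j * ((v j t - v i t) \<bullet> e))
      + \<sigma> * (\<Sum>i<N. m i * ((\<theta> i t - norm (v i t) powr p) * (e \<bullet> v i t)))"
    by (simp add: sum.distrib sum_distrib_left)
  moreover have "(\<Sum>i<N. \<Sum>j<N. weight t i j * ((v j t - v i t) \<bullet> e)) = 0"
    using double_sum_antisym_inner[of N "weight t" "\<lambda>i. v i t" "\<lambda>_. e"] weight_sym by simp
  ultimately show ?thesis by simp
qed

lemma momentum_pos: "t \<ge> 0 \<Longrightarrow> momentum t > 0"
  unfolding momentum_def using N_pos m_pos sector_preserved by (intro sum_pos) auto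

lemma momentum_bounded: "\<exists>B. \<forall>t\<ge>0. momentum t \<le> B"
proof -
  obtain Q where Q: "\<And>i t. i < N \<Longrightarrow> t \<ge> 0 \<Longrightarrow> norm (v i t) \<le> Q" using speed_bounded by blast
  have "momentum t \<le> M * Q" if "t \<ge> 0" for t
  proof -
    have "m i * (e \<bullet> v i t) \<le> m i * Q" if "i < N" for i
    proof -
      have "e \<bullet> v i t \<le> norm e * norm (v i t)" by (rule norm_cauchy_schwarz)
      then show ?thesis using e_unit Q[OF that \<open>t \<ge> 0\<close>] m_pos[OF that] by simp
    qed
    then have "momentum t \<le> (\<Sum>i<N. m i * Q)" unfolding momentum_def by (intro sum_mono) auto
    then show ?thesis by (simp add: M_def sum_distrib_right)
  qed
  then show ?thesis by blast
qed

text \<open>If all friction coefficients eventually stayed above a positive constant, the momentum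
  along the sector direction would grow exponentially, contradicting the speed bound.\<close>

lemma not_eventually_friction_coefficient_ge:
  assumes "c > 0"
  shows "\<not> (\<forall>\<^sub>F t in at_top. \<forall>i<N. \<theta> i t - norm (v i t) powr p \<ge> c)"
proof
  assume "\<forall>\<^sub>F t in at_top. \<forall>i<N. \<theta> i t - norm (v i t) powr p \<ge> c"
  then obtain T where "T \<ge> 0" and coeff: "\<And>t i. t \<ge> T \<Longrightarrow> i < N \<Longrightarrow> \<theta> i t - norm (v i t) powr p \<ge> c"
    unfolding eventually_at_top_linorder by (metis max.cobounded1 max.cobounded2 order.trans)
  let ?b = "\<sigma> * c"
  have growth: "momentum T * exp (?b * (t - T)) \<le> momentum t" if "t \<ge> T" for t
  proof (rule differential_inequality_exp_growth[OF _ _ that])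
    show "(momentum has_real_derivative
        \<sigma> * (\<Sum>i<N. m i * ((\<theta> i s - norm (v i s) powr p) * (e \<bullet> v i s)))) (at s within {T..})"
      if "s \<ge> T" for s
      by (rule DERIV_subset[OF momentum_deriv]) (use that \<open>T \<ge> 0\<close> in auto)
    show "?b * momentum s \<le> \<sigma> * (\<Sum>i<N. m i * ((\<theta> i s - norm (v i s) powr p) * (e \<bullet> v i s)))"
      if "s \<ge> T" for s
    proof -
      have "(\<Sum>i<N. m i * (c * (e \<bullet> v i s))) \<le> (\<Sum>i<N. m i * ((\<theta> i s - norm (v i s) powr p) * (e \<bullet> v i s)))"
        using coeff[OF that] sector_preserved that \<open>T \<ge> 0\<close> m_pos
        by (intro sum_mono mult_left_mono mult_right_mono) (auto intro: less_imp_le)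
      then have "\<sigma> * (\<Sum>i<N. m i * (c * (e \<bullet> v i s)))
          \<le> \<sigma> * (\<Sum>i<N. m i * ((\<theta> i s - norm (v i s) powr p) * (e \<bullet> v i s)))"
        using \<sigma>_pos by (intro mult_left_mono) auto
      moreover have "\<sigma> * (\<Sum>i<N. m i * (c * (e \<bullet> v i s))) = ?b * momentum s"
        by (simp add: momentum_def sum_distrib_left algebra_simps)
      ultimately show ?thesis by simp
    qed
  qed
  obtain B where B: "\<And>t. t \<ge> 0 \<Longrightarrow> momentum t \<le> B" using momentum_bounded by blast
  have "?b > 0" using \<sigma>_pos \<open>c > 0\<close> by simp
  obtain t where "t \<ge> T" "momentum T * exp (?b * (t - T)) > B"
    using exp_growth_exceeds[OF momentum_pos[OF \<open>T \<ge> 0\<close>] \<open>?b > 0\<close>] .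
  then show False using growth[OF \<open>t \<ge> T\<close>] B[of t] \<open>T \<ge> 0\<close> by linarith
qed

lemma reference_speed_not_eventually_le:
  assumes "r > 0" "(2 * r) powr p \<le> \<theta>bar / 4"
  shows "\<not> (\<forall>\<^sub>F t in at_top. norm (v 0 t) \<le> r)"
proof
  assume small: "\<forall>\<^sub>F t in at_top. norm (v 0 t) \<le> r"
  have "\<forall>\<^sub>F t in at_top. \<forall>i\<in>{..<N}. norm (v i t - v 0 t) < r"
    using velocity_alignment N_pos \<open>r > 0\<close> by (intro eventually_ball_finite ballI exp_decay_eventually_less) auto
  moreover have "\<forall>\<^sub>F t in at_top. \<forall>i\<in>{..<N}. \<bar>\<theta> i t - \<theta>bar\<bar> < \<theta>bar / 4"
    using \<theta>_consensus \<theta>bar_pos by (intro eventually_ball_finite ballI exp_decay_eventually_less) auto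
  ultimately have "\<forall>\<^sub>F t in at_top. \<forall>i<N. \<theta> i t - norm (v i t) powr p \<ge> \<theta>bar / 2"
    using small
  proof eventually_elim
    case (elim t)
    show ?case
    proof (intro allI impI)
      fix i assume "i < N"
      have "norm (v i t - v 0 t) < r" using elim \<open>i < N\<close> by auto
      then have "norm (v i t) \<le> 2 * r"
        using elim norm_triangle_ineq2[of "v i t" "v 0 t"] by linarith
      then have "norm (v i t) powr p \<le> \<theta>bar / 4"
        using assms(2) p_pos by (smt (verit) norm_ge_zero powr_mono2)
      moreover have "\<bar>\<theta> i t - \<theta>bar\<bar> < \<theta>bar / 4" using elim \<open>i < N\<close> by auto
      ultimately show "\<theta> i t - norm (v i t) powr p \<ge> \<theta>bar / 2" by linarith
    qed
  qed
  moreover have "\<theta>bar / 2 > 0" using \<theta>bar_pos by simp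
  ultimately show False using not_eventually_friction_coefficient_ge by blast
qed

text \<open>Particle 0 serves as a reference. Its acceleration differs from the one-particle law
  \<open>v' = \<sigma> (\<theta>bar - |v|\<^sup>p) v\<close> by the defect below, which decays exponentially by
  alignment and temperature consensus.\<close>

definition "defect t = accel 0 t - (\<sigma> * (\<theta>bar - norm (v 0 t) powr p)) *\<^sub>R v 0 t" for t

lemma defect_eq: "defect t = alignment 0 t + (\<sigma> * (\<theta> 0 t - \<theta>bar)) *\<^sub>R v 0 t"
  unfolding defect_def accel_def friction_def by (simp add: algebra_simps)

lemma defect_exp_decay: "exp_decay (\<lambda>t. norm (defect t))"
proof -
  obtain Q where "Q > 0" and Q: "\<And>i t. i < N \<Longrightarrow> t \<ge> 0 \<Longrightarrow> norm (v i t) \<le> Q"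
    using speed_bounded by blast
  let ?bound = "\<lambda>t. (\<Sum>j<N. m j * \<phi> 0 * norm (v j t - v 0 t)) + \<sigma> * Q * \<bar>\<theta> 0 t - \<theta>bar\<bar>"
  have "exp_decay ?bound"
    using velocity_alignment N_pos m_pos \<phi>_pos[of 0] \<sigma>_pos \<open>Q > 0\<close> \<theta>_consensus[OF N_pos]
    by (intro exp_decay_add exp_decay_sum exp_decay_cmult) (auto intro: less_imp_le)
  moreover have bound: "norm (defect t) \<le> ?bound t" if "t \<ge> 0" for t
  proof -
    have "norm (alignment 0 t) \<le> (\<Sum>j<N. norm ((m j * \<phi> (norm (x 0 t - x j t))) *\<^sub>R (v j t - v 0 t)))"
      unfolding alignment_def by (rule norm_sum)
    also have "\<dots> \<le> (\<Sum>j<N. m j * \<phi> 0 * norm (v j t - v 0 t))"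
    proof (rule sum_mono)
      fix j assume "j \<in> {..<N}"
      then have "\<bar>m j * \<phi> (norm (x 0 t - x j t))\<bar> \<le> m j * \<phi> 0"
        using m_pos[of j] \<phi>_pos[of "norm (x 0 t - x j t)"] \<phi>_le_\<phi>0[of "norm (x 0 t - x j t)"]
        by (simp add: abs_mult mult_left_mono)
      then show "norm ((m j * \<phi> (norm (x 0 t - x j t))) *\<^sub>R (v j t - v 0 t))
          \<le> m j * \<phi> 0 * norm (v j t - v 0 t)"
        by (simp add: mult_right_mono)
    qed
    finally have "norm (alignment 0 t) \<le> (\<Sum>j<N. m j * \<phi> 0 * norm (v j t - v 0 t))" .
    moreover have "norm ((\<sigma> * (\<theta> 0 t - \<theta>bar)) *\<^sub>R v 0 t) = \<sigma> * \<bar>\<theta> 0 t - \<theta>bar\<bar> * norm (v 0 t)"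
      using \<sigma>_pos by (simp add: abs_mult)
    moreover have "\<sigma> * \<bar>\<theta> 0 t - \<theta>bar\<bar> * norm (v 0 t) \<le> \<sigma> * Q * \<bar>\<theta> 0 t - \<theta>bar\<bar>"
      using mult_left_mono[OF Q[OF N_pos that], of "\<sigma> * \<bar>\<theta> 0 t - \<theta>bar\<bar>"] \<sigma>_pos by (simp add: mult_ac)
    moreover have "norm (defect t) \<le> norm (alignment 0 t) + norm ((\<sigma> * (\<theta> 0 t - \<theta>bar)) *\<^sub>R v 0 t)"
      unfolding defect_eq by (rule norm_triangle_ineq)
    ultimately show ?thesis by linarith
  qed
  then have "\<forall>\<^sub>F t in at_top. norm (defect t) \<le> ?bound t"
    unfolding eventually_at_top_linorder by (intro exI[of _ 0]) auto
  ultimately show ?thesis by (rule exp_decay_mono)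
qed

lemma v0_inner_accel:
  "v 0 t \<bullet> accel 0 t = \<sigma> * (\<theta>bar - norm (v 0 t) powr p) * (norm (v 0 t))\<^sup>2 + v 0 t \<bullet> defect t"
  unfolding defect_def by (simp add: inner_diff_right power2_norm_eq_inner)

lemma reference_speed_stays_gt:
  assumes "r > 0" "r powr p \<le> \<theta>bar / 4" "T \<ge> 0" "norm (v 0 T) > r"
    and small: "\<And>t. t \<ge> T \<Longrightarrow> norm (defect t) < 3 / 4 * \<sigma> * \<theta>bar * r"
    and "t \<ge> T"
  shows "norm (v 0 t) > r"
proof -
  let ?g = "\<lambda>_ t. v 0 t \<bullet> v 0 t - r\<^sup>2"
  have "?g 0 t > 0"
  proof (rule positivity_barrier[where g="?g" and N=1 and a=T
        and g'="\<lambda>_ t. v 0 t \<bullet> accel 0 t + accel 0 t \<bullet> v 0 t"])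
    show "(?g i has_real_derivative v 0 t \<bullet> accel 0 t + accel 0 t \<bullet> v 0 t) (at t within {T..})"
      if "t \<ge> T" for i t
    proof -
      have "((\<lambda>t. v 0 t \<bullet> v 0 t) has_real_derivative v 0 t \<bullet> accel 0 t + accel 0 t \<bullet> v 0 t)
          (at t within {0..})"
        using has_real_derivative_inner[OF v_deriv v_deriv] N_pos that \<open>T \<ge> 0\<close> by simp
      then have "((\<lambda>t. v 0 t \<bullet> v 0 t) has_real_derivative v 0 t \<bullet> accel 0 t + accel 0 t \<bullet> v 0 t)
          (at t within {T..})"
        by (rule DERIV_subset) (use \<open>T \<ge> 0\<close> in auto)
      from DERIV_diff[OF this DERIV_const] show ?thesis by simp
    qed
    show "?g i T > 0" for i
      using assms(1,4) by (simp add: power2_norm_eq_inner[symmetric] power_strict_mono)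
    fix t assume "t > T" "?g 0 t = 0"
    then have "norm (v 0 t) = r"
      using \<open>r > 0\<close> by (simp add: power2_norm_eq_inner[symmetric] power2_eq_iff_nonneg)
    have "- (v 0 t \<bullet> defect t) \<le> r * norm (defect t)"
      using norm_cauchy_schwarz[of "- v 0 t" "defect t"] \<open>norm (v 0 t) = r\<close> by simp
    also have "\<dots> < r * (3 / 4 * \<sigma> * \<theta>bar * r)"
      using small[of t] \<open>t > T\<close> \<open>r > 0\<close> by (intro mult_strict_left_mono) auto
    also have "\<dots> = 3 / 4 * \<sigma> * \<theta>bar * r\<^sup>2" by (simp add: power2_eq_square)
    finally have "v 0 t \<bullet> defect t > - (3 / 4 * \<sigma> * \<theta>bar * r\<^sup>2)" by linarith
    moreover have "\<sigma> * (3 / 4 * \<theta>bar) * r\<^sup>2 \<le> \<sigma> * (\<theta>bar - norm (v 0 t) powr p) * (norm (v 0 t))\<^sup>2"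
      unfolding \<open>norm (v 0 t) = r\<close> using assms(2) \<sigma>_pos by (intro mult_right_mono mult_left_mono) auto
    ultimately have "v 0 t \<bullet> accel 0 t > 0" unfolding v0_inner_accel by simp
    then show "v 0 t \<bullet> accel 0 t + accel 0 t \<bullet> v 0 t > 0" by (simp add: inner_commute)
  qed (use \<open>t \<ge> T\<close> in auto)
  then have "r\<^sup>2 < (norm (v 0 t))\<^sup>2" by (simp add: power2_norm_eq_inner)
  then show ?thesis by (rule power_less_imp_less_base) simp
qed

lemma reference_speed_lower_bound: "\<exists>\<rho>>0. \<forall>\<^sub>F t in at_top. norm (v 0 t) \<ge> \<rho>"
proof -
  define r where "r = (\<theta>bar / 4) powr (1 / p) / 2"
  have "r > 0" using \<theta>bar_pos by (simp add: r_def)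
  have "(2 * r) powr p \<le> \<theta>bar / 4"
    using \<theta>bar_pos p_pos by (simp add: r_def powr_powr)
  moreover have "r powr p \<le> (2 * r) powr p" using \<open>r > 0\<close> p_pos by (intro powr_mono2) auto
  ultimately have "r powr p \<le> \<theta>bar / 4" by simp
  have "\<forall>\<^sub>F t in at_top. norm (defect t) < 3 / 4 * \<sigma> * \<theta>bar * r"
    using defect_exp_decay \<sigma>_pos \<theta>bar_pos \<open>r > 0\<close> by (intro exp_decay_eventually_less) auto
  then obtain T\<^sub>0 where small: "\<And>t. t \<ge> T\<^sub>0 \<Longrightarrow> norm (defect t) < 3 / 4 * \<sigma> * \<theta>bar * r"
    unfolding eventually_at_top_linorder by blast
  have "\<not> (\<forall>t\<ge>max T\<^sub>0 0. norm (v 0 t) \<le> r)"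
    using reference_speed_not_eventually_le[OF \<open>r > 0\<close> \<open>(2 * r) powr p \<le> \<theta>bar / 4\<close>]
    unfolding eventually_at_top_linorder by blast
  then obtain T where "T \<ge> T\<^sub>0" "T \<ge> 0" "norm (v 0 T) > r" by (auto simp: not_le)
  have "norm (v 0 t) > r" if "t \<ge> T" for t
  proof (rule reference_speed_stays_gt[OF \<open>r > 0\<close> \<open>r powr p \<le> \<theta>bar / 4\<close> \<open>T \<ge> 0\<close>
        \<open>norm (v 0 T) > r\<close> _ that])
    show "norm (defect s) < 3 / 4 * \<sigma> * \<theta>bar * r" if "s \<ge> T" for s
      using small that \<open>T \<ge> T\<^sub>0\<close> by simp
  qed
  then have "\<forall>\<^sub>F t in at_top. norm (v 0 t) \<ge> r"
    unfolding eventually_at_top_linorder by (auto intro: less_imp_le)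
  then show ?thesis using \<open>r > 0\<close> by blast
qed

lemma speed_power_deriv:
  assumes "t \<ge> 0" "v 0 t \<noteq> 0"
  shows "((\<lambda>t. norm (v 0 t) powr p) has_real_derivative
           p * \<sigma> * (\<theta>bar - norm (v 0 t) powr p) * norm (v 0 t) powr p
           + p * norm (v 0 t) powr (p - 2) * (v 0 t \<bullet> defect t)) (at t within {0..})"
proof -
  have "norm (v 0 t) powr (p - 2) * (norm (v 0 t))\<^sup>2 = norm (v 0 t) powr (p - 2) * norm (v 0 t) powr 2"
    using assms(2) by (simp add: powr_numeral)
  also have "\<dots> = norm (v 0 t) powr (p - 2 + 2)" by (rule powr_add[symmetric])
  finally have "norm (v 0 t) powr (p - 2) * (norm (v 0 t))\<^sup>2 = norm (v 0 t) powr p" by simp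
  then have "p * norm (v 0 t) powr (p - 2) * (v 0 t \<bullet> accel 0 t)
      = p * \<sigma> * (\<theta>bar - norm (v 0 t) powr p) * norm (v 0 t) powr p
        + p * norm (v 0 t) powr (p - 2) * (v 0 t \<bullet> defect t)"
    unfolding v0_inner_accel by (simp add: algebra_simps)
  with has_real_derivative_norm_powr[OF assms(2) v_deriv[OF N_pos assms(1)], where p=p] show ?thesis
    by simp
qed

lemma speed_power_forcing_exp_decay:
  assumes "\<rho> > 0" and lower: "\<And>t. t \<ge> T \<Longrightarrow> norm (v 0 t) \<ge> \<rho>"
  shows "exp_decay (\<lambda>t. \<bar>p * norm (v 0 t) powr (p - 2) * (v 0 t \<bullet> defect t)\<bar>)"
proof -
  obtain Q where Q: "\<And>t. t \<ge> 0 \<Longrightarrow> norm (v 0 t) \<le> Q" using speed_bounded N_pos by blast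
  let ?K = "p * (\<rho> powr (p - 1) + Q powr (p - 1))"
  have "\<bar>p * norm (v 0 t) powr (p - 2) * (v 0 t \<bullet> defect t)\<bar> \<le> ?K * norm (defect t)"
    if "t \<ge> max T 0" for t
  proof -
    have "norm (v 0 t) \<ge> \<rho>" "norm (v 0 t) \<le> Q" using lower Q that by auto
    have "norm (v 0 t) powr (p - 2) * norm (v 0 t) = norm (v 0 t) powr (p - 2) * norm (v 0 t) powr 1"
      by simp
    also have "\<dots> = norm (v 0 t) powr (p - 2 + 1)" by (rule powr_add[symmetric])
    finally have eq: "norm (v 0 t) powr (p - 2) * norm (v 0 t) = norm (v 0 t) powr (p - 1)" by simp
    have "\<bar>p * norm (v 0 t) powr (p - 2) * (v 0 t \<bullet> defect t)\<bar>
        = p * norm (v 0 t) powr (p - 2) * \<bar>v 0 t \<bullet> defect t\<bar>"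
      using p_pos by (simp add: abs_mult)
    also have "\<dots> \<le> p * norm (v 0 t) powr (p - 2) * (norm (v 0 t) * norm (defect t))"
      using p_pos by (intro mult_left_mono Cauchy_Schwarz_ineq2) auto
    also have "\<dots> = p * norm (v 0 t) powr (p - 1) * norm (defect t)"
      by (simp flip: eq add: ac_simps)
    also have "\<dots> \<le> ?K * norm (defect t)"
      using \<open>\<rho> \<le> norm (v 0 t)\<close> \<open>norm (v 0 t) \<le> Q\<close> \<open>\<rho> > 0\<close> p_pos
      by (intro mult_right_mono mult_left_mono powr_le_add_powr_bounds) auto
    finally show ?thesis .
  qed
  then have "\<forall>\<^sub>F t in at_top. \<bar>p * norm (v 0 t) powr (p - 2) * (v 0 t \<bullet> defect t)\<bar> \<le> ?K * norm (defect t)"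
    unfolding eventually_at_top_linorder by blast
  moreover have "exp_decay (\<lambda>t. ?K * norm (defect t))"
    using p_pos by (intro exp_decay_cmult defect_exp_decay) auto
  ultimately show ?thesis by (rule exp_decay_mono[rotated])
qed

text \<open>\<open>q = |v\<^sub>0|\<^sup>p\<close> obeys \<open>q' = p \<sigma> (\<theta>bar - q) q + \<eta>\<close> with an exponentially small \<open>\<eta>\<close>, and
  the factor \<open>p \<sigma> q\<close> is bounded below by \<open>p \<sigma> \<rho>\<^sup>p\<close>.\<close>

lemma speed_power_consensus: "exp_decay (\<lambda>t. \<bar>norm (v 0 t) powr p - \<theta>bar\<bar>)"
proof -
  obtain \<rho> where "\<rho> > 0" and "\<forall>\<^sub>F t in at_top. norm (v 0 t) \<ge> \<rho>"
    using reference_speed_lower_bound by blast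
  then obtain T\<^sub>0 where lower: "\<And>t. t \<ge> T\<^sub>0 \<Longrightarrow> norm (v 0 t) \<ge> \<rho>"
    unfolding eventually_at_top_linorder by blast
  define T where "T = max T\<^sub>0 0"
  define q where "q t = norm (v 0 t) powr p" for t
  define \<eta> where "\<eta> t = p * norm (v 0 t) powr (p - 2) * (v 0 t \<bullet> defect t)" for t
  define \<mu> where "\<mu> = p * \<sigma> * \<rho> powr p"
  have "\<mu> > 0" using p_pos \<sigma>_pos \<open>\<rho> > 0\<close> by (simp add: \<mu>_def)
  have q_ge: "q t \<ge> \<rho> powr p" if "t \<ge> T" for t
    using lower[of t] that \<open>\<rho> > 0\<close> p_pos by (auto simp: q_def T_def intro: powr_mono2)
  have deriv: "((\<lambda>t. (q t - \<theta>bar)\<^sup>2) has_real_derivative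
      2 * (q t - \<theta>bar) * (p * \<sigma> * (\<theta>bar - q t) * q t + \<eta> t)) (at t within {T..})" if "t \<ge> T" for t
  proof -
    have "v 0 t \<noteq> 0" using lower[of t] that \<open>\<rho> > 0\<close> by (auto simp: T_def)
    then have "(q has_real_derivative p * \<sigma> * (\<theta>bar - q t) * q t + \<eta> t) (at t within {T..})"
      unfolding q_def \<eta>_def
      by (intro DERIV_subset[OF speed_power_deriv]) (use that in \<open>auto simp: T_def\<close>)
    then show ?thesis by (auto intro!: derivative_eq_intros)
  qed
  have "2 * (q t - \<theta>bar) * (p * \<sigma> * (\<theta>bar - q t) * q t + \<eta> t)
      \<le> - \<mu> * (q t - \<theta>bar)\<^sup>2 + 1 / \<mu> * (\<eta> t)\<^sup>2" if "t \<ge> T" for t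
  proof -
    have "\<mu> \<le> p * \<sigma> * q t" unfolding \<mu>_def using q_ge[OF that] p_pos \<sigma>_pos by simp
    then have "- 2 * (p * \<sigma> * q t) * (q t - \<theta>bar)\<^sup>2 \<le> - 2 * \<mu> * (q t - \<theta>bar)\<^sup>2"
      by (intro mult_right_mono) auto
    moreover have "2 * (q t - \<theta>bar) * \<eta> t \<le> \<mu> * (q t - \<theta>bar)\<^sup>2 + (\<eta> t)\<^sup>2 / \<mu>"
      by (rule two_mult_le_weighted_squares[OF \<open>\<mu> > 0\<close>])
    ultimately show ?thesis by (simp add: power2_eq_square algebra_simps)
  qed
  moreover have "exp_decay (\<lambda>t. 1 / \<mu> * (\<eta> t)\<^sup>2)"
    using speed_power_forcing_exp_decay[OF \<open>\<rho> > 0\<close> lower] \<open>\<mu> > 0\<close>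
    by (intro exp_decay_cmult exp_decay_square) (auto simp: \<eta>_def)
  ultimately have "exp_decay (\<lambda>t. (q t - \<theta>bar)\<^sup>2)"
    using \<open>\<mu> > 0\<close> by (intro exp_decay_of_differential_inequality[OF deriv]) auto
  then show ?thesis unfolding q_def by (rule exp_decay_abs_of_square)
qed

lemma reference_accel_exp_decay: "exp_decay (\<lambda>t. norm (accel 0 t))"
proof -
  obtain Q where Q: "\<And>t. t \<ge> 0 \<Longrightarrow> norm (v 0 t) \<le> Q" using speed_bounded N_pos by blast
  have "norm (accel 0 t) \<le> \<sigma> * Q * \<bar>norm (v 0 t) powr p - \<theta>bar\<bar> + norm (defect t)" if "t \<ge> 0" for t
  proof -
    have "norm (accel 0 t) \<le> norm ((\<sigma> * (\<theta>bar - norm (v 0 t) powr p)) *\<^sub>R v 0 t) + norm (defect t)"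
      using norm_triangle_ineq[of "(\<sigma> * (\<theta>bar - norm (v 0 t) powr p)) *\<^sub>R v 0 t" "defect t"]
      by (simp add: defect_def)
    moreover have "norm ((\<sigma> * (\<theta>bar - norm (v 0 t) powr p)) *\<^sub>R v 0 t)
        = \<sigma> * \<bar>norm (v 0 t) powr p - \<theta>bar\<bar> * norm (v 0 t)"
      using \<sigma>_pos by (simp add: abs_mult abs_minus_commute)
    moreover have "\<sigma> * \<bar>norm (v 0 t) powr p - \<theta>bar\<bar> * norm (v 0 t) \<le> \<sigma> * Q * \<bar>norm (v 0 t) powr p - \<theta>bar\<bar>"
      using mult_left_mono[OF Q[OF that], of "\<sigma> * \<bar>norm (v 0 t) powr p - \<theta>bar\<bar>"] \<sigma>_pos
      by (simp add: mult_ac)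
    ultimately show ?thesis by linarith
  qed
  then have "\<forall>\<^sub>F t in at_top. norm (accel 0 t) \<le> \<sigma> * Q * \<bar>norm (v 0 t) powr p - \<theta>bar\<bar> + norm (defect t)"
    unfolding eventually_at_top_linorder by (intro exI[of _ 0]) auto
  moreover have "exp_decay (\<lambda>t. \<sigma> * Q * \<bar>norm (v 0 t) powr p - \<theta>bar\<bar> + norm (defect t))"
    using \<sigma>_pos order_trans[OF norm_ge_zero Q[of 0]]
    by (intro exp_decay_add exp_decay_cmult speed_power_consensus defect_exp_decay) auto
  ultimately show ?thesis by (rule exp_decay_mono[rotated])
qed

lemma reference_velocity_limit:
  obtains vbar where "norm vbar = \<theta>bar powr (1 / p)" "exp_decay (\<lambda>t. norm (v 0 t - vbar))"
proof -
  obtain vbar where decay: "exp_decay (\<lambda>t. norm (v 0 t - vbar))"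
    using exp_convergence_of_exp_decaying_derivative[OF v_deriv[OF N_pos] reference_accel_exp_decay]
    by blast
  have "((\<lambda>t. norm (v 0 t) powr p) \<longlongrightarrow> norm vbar powr p) at_top"
    using exp_decay_imp_tendsto[OF decay] p_pos by (auto intro!: tendsto_intros)
  moreover have "((\<lambda>t. norm (v 0 t) powr p) \<longlongrightarrow> \<theta>bar) at_top"
    using speed_power_consensus by (intro exp_decay_imp_tendsto) simp
  ultimately have "norm vbar powr p = \<theta>bar" using tendsto_unique by force
  then have "\<theta>bar powr (1 / p) = (norm vbar powr p) powr (1 / p)" by simp
  also have "\<dots> = norm vbar" using p_pos by (simp add: powr_powr)
  finally have "\<theta>bar powr (1 / p) = norm vbar" .
  with decay show thesis using that by simp
qed

lemma velocity_exp_convergence: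
  obtains vbar where "norm vbar = \<theta>bar powr (1 / p)" "\<And>i. i < N \<Longrightarrow> exp_decay (\<lambda>t. norm (v i t - vbar))"
proof -
  obtain vbar where "norm vbar = \<theta>bar powr (1 / p)" and decay: "exp_decay (\<lambda>t. norm (v 0 t - vbar))"
    using reference_velocity_limit by blast
  moreover have "exp_decay (\<lambda>t. norm (v i t - vbar))" if "i < N" for i
  proof (rule exp_decay_mono)
    show "exp_decay (\<lambda>t. norm (v i t - v 0 t) + norm (v 0 t - vbar))"
      using velocity_alignment[OF that N_pos] decay by (rule exp_decay_add)
    show "\<forall>\<^sub>F t in at_top. norm (v i t - vbar) \<le> norm (v i t - v 0 t) + norm (v 0 t - vbar)"
      using norm_triangle_ineq[of "v i t - v 0 t" "v 0 t - vbar" for t] by simp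
  qed
  ultimately show thesis using that by blast
qed

lemma reference_velocity_not_tendsto_zero: "\<not> (v 0 \<longlongrightarrow> 0) at_top"
proof
  assume "(v 0 \<longlongrightarrow> 0) at_top"
  moreover obtain vbar where "norm vbar = \<theta>bar powr (1 / p)" "exp_decay (\<lambda>t. norm (v 0 t - vbar))"
    using reference_velocity_limit by blast
  moreover have "(v 0 \<longlongrightarrow> vbar) at_top" if "exp_decay (\<lambda>t. norm (v 0 t - vbar))" for vbar
    using that by (rule exp_decay_imp_tendsto)
  ultimately have "\<theta>bar powr (1 / p) = 0" using tendsto_unique by force
  with \<theta>bar_pos show False by simp
qed

lemma velocity_uniform_exp_convergence:
  obtains vbar C rate where "norm vbar = \<theta>bar powr (1 / p)" "C > 0" "rate > 0"
    "\<And>i t. i < N \<Longrightarrow> t \<ge> 0 \<Longrightarrow> norm (v i t - vbar) \<le> C * exp (- rate * t)"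
proof -
  obtain vbar where "norm vbar = \<theta>bar powr (1 / p)"
    and decay: "\<And>i. i < N \<Longrightarrow> exp_decay (\<lambda>t. norm (v i t - vbar))"
    using velocity_exp_convergence by blast
  obtain Q where Q: "\<And>i t. i < N \<Longrightarrow> t \<ge> 0 \<Longrightarrow> norm (v i t) \<le> Q"
    using speed_bounded by blast
  obtain C \<gamma> where "C > 0" "\<gamma> > 0"
    "\<And>i t. i \<in> {..<N} \<Longrightarrow> t \<ge> 0 \<Longrightarrow> norm (v i t - vbar) \<le> C * exp (- \<gamma> * t)"
  proof (rule exp_decay_uniform_bound_finite[of "{..<N}" "\<lambda>i t. norm (v i t - vbar)"])
    show "0 \<le> norm (v i t - vbar) \<and> norm (v i t - vbar) \<le> Q + norm vbar"
      if "i \<in> {..<N}" "t \<ge> 0" for i t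
      using Q[of i t] that norm_triangle_ineq4[of "v i t" vbar] by simp
  qed (use decay in auto)
  with \<open>norm vbar = \<theta>bar powr (1 / p)\<close> show thesis using that by auto
qed

end

theorem mainTheorem8:
  fixes N :: nat and m :: "nat \<Rightarrow> real" and \<sigma> p \<kappa> :: real and \<phi> :: "real \<Rightarrow> real"
    and x v :: "nat \<Rightarrow> real \<Rightarrow> 'a::euclidean_space" and \<theta> :: "nat \<Rightarrow> real \<Rightarrow> real"
  assumes N: "N \<ge> 1"
    and m_pos: "\<forall>i<N. m i > 0"
    and \<sigma>_pos: "\<sigma> > 0" and p_pos: "p > 0" and \<kappa>_pos: "\<kappa> > 0"
    and kernel: "comm_kernel \<phi>"
    and phi_star_pos: "(INF r\<in>{0..}. \<phi> r) > 0"
    and cond: "(INF r\<in>{0..}. \<phi> r) * (\<Sum>i<N. m i) >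
               \<sigma> * ((\<Sum>i<N. m i * \<theta> i 0) / (\<Sum>i<N. m i))"
    and sol: "CSF_solution N m \<sigma> p \<kappa> \<phi> x v \<theta>"
    and theta0: "\<forall>i<N. \<theta> i 0 > 0"
    and sectorial: "\<exists>e::'a. norm e = 1 \<and> (\<forall>i<N. e \<bullet> v i 0 > 0)"
  shows "\<not> (\<forall>i<N. (v i \<longlongrightarrow> 0) at_top) \<and>
         (\<exists>vbar::'a. norm vbar = ((\<Sum>i<N. m i * \<theta> i 0) / (\<Sum>i<N. m i)) powr (1 / p) \<and>
            (\<exists>C rate. C > 0 \<and> rate > 0 \<and>
               (\<forall>i<N. \<forall>t\<ge>0. norm (v i t - vbar) \<le> C * exp (- rate * t))))"
proof -
  obtain e :: 'a where "norm e = 1" "\<forall>i<N. e \<bullet> v i 0 > 0" using sectorial by blast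
  then interpret CSF_flocking N m \<sigma> p \<kappa> \<phi> x v \<theta> e
    using assms by unfold_locales auto
  obtain vbar C rate where "norm vbar = \<theta>bar powr (1 / p)" "C > 0" "rate > 0"
    "\<And>i t. i < N \<Longrightarrow> t \<ge> 0 \<Longrightarrow> norm (v i t - vbar) \<le> C * exp (- rate * t)"
    by (rule velocity_uniform_exp_convergence) blast
  then show ?thesis
    using reference_velocity_not_tendsto_zero N_pos unfolding \<theta>bar_def M_def by blast
qed

end
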